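(* Let $S$ be a finite semigroup with an anti-involution $*$, let $R$ be a commutative ring with $1$, and let $\alpha$ be a twisting from $S$ into $R$ with $\alpha(x,y)=\alpha(y^*,x^* )$ for all $x,y\in S$. Suppose that for each $\mathcal D$-class $D$ there is an idempotent $1_D\in D$ with $1_D^*=1_D$; let $G_D$ be the $\mathcal H$-class of $1_D$. Suppose that $\alpha(x,y)=\alpha(x,z)$ for all $x,y,z\in S$ with $y\,\mathcal R\,z$. Suppose that for each $D$ the (untwisted) group algebra $R[G_D]$ is cellular with cell datum $(\Lambda_D,M_D,C,* )$, where $*$ is the linear extension of $*|_{G_D}$, and write $C^\lambda_{st}=\sum_{g\in G_D}c^\lambda_{st}(g)g$. Let $\mathcal D$ be the set of $\mathcal D$-classes, $\mathcal L_D$ the set of $\mathcal L$-classes in $D$, $\Lambda=\{(D,\lambda)\mid D\in\mathcal D,\lambda\in\Lambda_D\}$ ordered by $(D_1,\lambda_1)\le(D_2,\lambda_2)$ iff $D_1<_{\mathcal D}D_2$ or ($D_1=D_2$ and $\lambda_1\le\lambda_2$ in $\Lambda_{D_1}$), $M(D,\lambda)=\mathcal L_D\times M_D(\lambda)$, choose for each $L\in\mathcal L_D$ an element $u_L\in L$ with $u_L\,\mathcal R\,1_D$, and set \[C^{(D,\lambda)}_{(L,s)(K,t)}=\sum_{g\in G_D}c^\lambda_{st}(g)\,(u_L^*gu_K)\in R^\alpha[S].\] Then $R^\alpha[S]$ is cellular with cell datum $(\Lambda,M,C,* )$, where $*$ is the linear extension of $*$ to $R^\alpha[S]$.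
   Context: Green's relations on a semigroup $S$ ($S^1$ = $S$ with identity adjoined): $x\le_{\mathcal R}y$ iff $x\in yS^1$; $x\le_{\mathcal L}y$ iff $x\in S^1y$; $x\le_{\mathcal J}y$ iff $x\in S^1yS^1$; $\mathcal R,\mathcal L,\mathcal J$ the associated equivalences; $\mathcal H=\mathcal R\cap\mathcal L$; $\mathcal D$ generated by $\mathcal R\cup\mathcal L$. For finite $S$, $\mathcal D=\mathcal J$ and $\le_{\mathcal J}$ induces a partial order $\le_{\mathcal D}$ on $\mathcal D$-classes; $<_{\mathcal D}$ is its strict version. An anti-involution of $S$: $(x^* )^*=x$, $(xy)^*=y^*x^*$. A twisting $\alpha:S\times S\to R$ satisfies $\alpha(x,y)\alpha(xy,z)=\alpha(x,yz)\alpha(y,z)$; $R^\alpha[S]$ is the free $R$-module on $S$ with product $x\cdot y=\alpha(x,y)(xy)$. An anti-involution of an $R$-algebra is $R$-linear with $(a^* )^*=a$, $(ab)^*=b^*a^*$. Cellular algebra with cell datum $(\Lambda,M,C,* )$: (C1) $\Lambda$ finite poset, finite sets $M(\lambda)$, and $\{C^\lambda_{st}\}$ an $R$-basis; (C2) $*$ anti-involution with $(C^\lambda_{st})^*=C^\lambda_{ts}$; (C3) for all $\lambda,s,a$ there are $r_a(s',s)\in R$ with $aC^\lambda_{st}\in\sum_{s'}r_a(s',s)C^\lambda_{s't}+A(<\lambda)$ for all $t$, where $A(<\lambda)$ is the span of the $C^\mu_{s''t''}$ with $\mu<\lambda$. *)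

theory Defs
  imports Main
begin

definition R_le :: "'a::semigroup_mult \<Rightarrow> 'a \<Rightarrow> bool" where
  "R_le x y \<longleftrightarrow> x = y \<or> (\<exists>s. x = y * s)"

definition L_le :: "'a::semigroup_mult \<Rightarrow> 'a \<Rightarrow> bool" where
  "L_le x y \<longleftrightarrow> x = y \<or> (\<exists>s. x = s * y)"

definition J_le :: "'a::semigroup_mult \<Rightarrow> 'a \<Rightarrow> bool" where
  "J_le x y \<longleftrightarrow> x = y \<or> (\<exists>s. x = s * y) \<or> (\<exists>t. x = y * t) \<or> (\<exists>s t. x = s * y * t)"

definition R_eq :: "'a::semigroup_mult \<Rightarrow> 'a \<Rightarrow> bool" where
  "R_eq x y \<longleftrightarrow> R_le x y \<and> R_le y x"

definition L_eq :: "'a::semigroup_mult \<Rightarrow> 'a \<Rightarrow> bool" where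
  "L_eq x y \<longleftrightarrow> L_le x y \<and> L_le y x"

definition H_eq :: "'a::semigroup_mult \<Rightarrow> 'a \<Rightarrow> bool" where
  "H_eq x y \<longleftrightarrow> R_eq x y \<and> L_eq x y"

text \<open>D is the equivalence generated by R and L (both already equivalences).\<close>
definition D_eq :: "'a::semigroup_mult \<Rightarrow> 'a \<Rightarrow> bool" where
  "D_eq = (\<lambda>x y. R_eq x y \<or> L_eq x y)\<^sup>*\<^sup>*"

definition Dclasses :: "'a::semigroup_mult set set" where
  "Dclasses = range (\<lambda>x. {y. D_eq x y})"

definition Hclass :: "'a::semigroup_mult \<Rightarrow> 'a set" where
  "Hclass x = {y. H_eq x y}"

definition Lclasses_in :: "'a::semigroup_mult set \<Rightarrow> 'a set set" where
  "Lclasses_in D = (\<lambda>x. {y. L_eq x y}) ` D"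

text \<open>Order on D-classes induced by the J-preorder (D = J for finite semigroups).\<close>
definition Dclass_le :: "'a::semigroup_mult set \<Rightarrow> 'a set \<Rightarrow> bool" where
  "Dclass_le D1 D2 \<longleftrightarrow> (\<exists>x\<in>D1. \<exists>y\<in>D2. J_le x y)"

definition Dclass_less :: "'a::semigroup_mult set \<Rightarrow> 'a set \<Rightarrow> bool" where
  "Dclass_less D1 D2 \<longleftrightarrow> Dclass_le D1 D2 \<and> D1 \<noteq> D2"

definition sg_anti_involution :: "('a::semigroup_mult \<Rightarrow> 'a) \<Rightarrow> bool" where
  "sg_anti_involution st \<longleftrightarrow> (\<forall>x. st (st x) = x) \<and> (\<forall>x y. st (x * y) = st y * st x)"

definition twisting :: "('a::semigroup_mult \<Rightarrow> 'a \<Rightarrow> 'r::comm_ring_1) \<Rightarrow> bool" where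
  "twisting \<alpha> \<longleftrightarrow> (\<forall>x y z. \<alpha> x y * \<alpha> (x * y) z = \<alpha> x (y * z) * \<alpha> y z)"

text \<open>Elements of the free R-module on X are the functions vanishing outside X
  (coefficient of basis element x is f x).\<close>
definition in_alg :: "'x set \<Rightarrow> ('x \<Rightarrow> 'r::comm_ring_1) \<Rightarrow> bool" where
  "in_alg X f \<longleftrightarrow> (\<forall>x. x \<notin> X \<longrightarrow> f x = 0)"

text \<open>Twisted semigroup algebra product: x \<cdot> y = \<alpha>(x,y) (xy), extended bilinearly.\<close>
definition tw_mult :: "('a::{semigroup_mult,finite} \<Rightarrow> 'a \<Rightarrow> 'r::comm_ring_1)
    \<Rightarrow> ('a \<Rightarrow> 'r) \<Rightarrow> ('a \<Rightarrow> 'r) \<Rightarrow> ('a \<Rightarrow> 'r)" where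
  "tw_mult \<alpha> f g = (\<lambda>z. \<Sum>x\<in>UNIV. \<Sum>y\<in>UNIV. if x * y = z then \<alpha> x y * f x * g y else 0)"

text \<open>Linear extension of an involution st: (sum f(x) x)^* = sum f(x) x^*.\<close>
definition lin_star :: "('a \<Rightarrow> 'a) \<Rightarrow> ('a \<Rightarrow> 'r) \<Rightarrow> ('a \<Rightarrow> 'r)" where
  "lin_star st f = (\<lambda>z. f (st z))"

definition is_R_algebra :: "'x set \<Rightarrow> (('x \<Rightarrow> 'r::comm_ring_1) \<Rightarrow> ('x \<Rightarrow> 'r) \<Rightarrow> ('x \<Rightarrow> 'r)) \<Rightarrow> bool" where
  "is_R_algebra X mul \<longleftrightarrow>
     (\<forall>a b. in_alg X a \<longrightarrow> in_alg X b \<longrightarrow> in_alg X (mul a b)) \<and>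
     (\<forall>a b c. in_alg X a \<longrightarrow> in_alg X b \<longrightarrow> in_alg X c \<longrightarrow> mul (mul a b) c = mul a (mul b c)) \<and>
     (\<forall>a b c k. in_alg X a \<longrightarrow> in_alg X b \<longrightarrow> in_alg X c \<longrightarrow>
        mul (\<lambda>x. k * a x + b x) c = (\<lambda>x. k * mul a c x + mul b c x) \<and>
        mul c (\<lambda>x. k * a x + b x) = (\<lambda>x. k * mul c a x + mul c b x))"

definition alg_anti_involution :: "'x set \<Rightarrow> (('x \<Rightarrow> 'r::comm_ring_1) \<Rightarrow> ('x \<Rightarrow> 'r) \<Rightarrow> ('x \<Rightarrow> 'r))
    \<Rightarrow> (('x \<Rightarrow> 'r) \<Rightarrow> ('x \<Rightarrow> 'r)) \<Rightarrow> bool" where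
  "alg_anti_involution X mul st \<longleftrightarrow>
     (\<forall>a. in_alg X a \<longrightarrow> in_alg X (st a) \<and> st (st a) = a) \<and>
     (\<forall>a b k. in_alg X a \<longrightarrow> in_alg X b \<longrightarrow> st (\<lambda>x. k * a x + b x) = (\<lambda>x. k * st a x + st b x)) \<and>
     (\<forall>a b. in_alg X a \<longrightarrow> in_alg X b \<longrightarrow> st (mul a b) = mul (st b) (st a))"

definition cell_index :: "'l set \<Rightarrow> ('l \<Rightarrow> 'm set) \<Rightarrow> ('l \<times> 'm \<times> 'm) set" where
  "cell_index \<Lambda> M = Sigma \<Lambda> (\<lambda>l. M l \<times> M l)"

definition lower_span :: "'l set \<Rightarrow> ('l \<Rightarrow> 'l \<Rightarrow> bool) \<Rightarrow> ('l \<Rightarrow> 'm set)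
    \<Rightarrow> ('l \<Rightarrow> 'm \<Rightarrow> 'm \<Rightarrow> 'x \<Rightarrow> 'r::comm_ring_1) \<Rightarrow> 'l \<Rightarrow> ('x \<Rightarrow> 'r) set" where
  "lower_span \<Lambda> le M C l =
     {f. \<exists>c. f = (\<lambda>x. \<Sum>i\<in>{i\<in>cell_index \<Lambda> M. le (fst i) l \<and> fst i \<noteq> l}.
                        c i * C (fst i) (fst (snd i)) (snd (snd i)) x)}"

definition cellular_algebra :: "'x set \<Rightarrow> (('x \<Rightarrow> 'r::comm_ring_1) \<Rightarrow> ('x \<Rightarrow> 'r) \<Rightarrow> ('x \<Rightarrow> 'r))
    \<Rightarrow> (('x \<Rightarrow> 'r) \<Rightarrow> ('x \<Rightarrow> 'r)) \<Rightarrow> 'l set \<Rightarrow> ('l \<Rightarrow> 'l \<Rightarrow> bool) \<Rightarrow> ('l \<Rightarrow> 'm set)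
    \<Rightarrow> ('l \<Rightarrow> 'm \<Rightarrow> 'm \<Rightarrow> 'x \<Rightarrow> 'r) \<Rightarrow> bool" where
  "cellular_algebra X mul st \<Lambda> le M C \<longleftrightarrow>
     finite X \<and> is_R_algebra X mul \<and>
     \<comment> \<open>(C1)\<close>
     finite \<Lambda> \<and> (\<forall>l\<in>\<Lambda>. finite (M l)) \<and>
     (\<forall>a\<in>\<Lambda>. le a a) \<and> (\<forall>a\<in>\<Lambda>. \<forall>b\<in>\<Lambda>. le a b \<and> le b a \<longrightarrow> a = b) \<and>
     (\<forall>a\<in>\<Lambda>. \<forall>b\<in>\<Lambda>. \<forall>c\<in>\<Lambda>. le a b \<and> le b c \<longrightarrow> le a c) \<and>
     (\<forall>l\<in>\<Lambda>. \<forall>s\<in>M l. \<forall>t\<in>M l. in_alg X (C l s t)) \<and>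
     (\<forall>f. in_alg X f \<longrightarrow>
        (\<exists>!r. (\<forall>i. i \<notin> cell_index \<Lambda> M \<longrightarrow> r i = 0) \<and>
              f = (\<lambda>x. \<Sum>i\<in>cell_index \<Lambda> M. r i * C (fst i) (fst (snd i)) (snd (snd i)) x))) \<and>
     \<comment> \<open>(C2)\<close>
     alg_anti_involution X mul st \<and>
     (\<forall>l\<in>\<Lambda>. \<forall>s\<in>M l. \<forall>t\<in>M l. st (C l s t) = C l t s) \<and>
     \<comment> \<open>(C3)\<close>
     (\<forall>l\<in>\<Lambda>. \<forall>s\<in>M l. \<forall>a. in_alg X a \<longrightarrow>
        (\<exists>r. \<forall>t\<in>M l. (\<lambda>x. mul a (C l s t) x - (\<Sum>s'\<in>M l. r s' * C l s' t x))
                        \<in> lower_span \<Lambda> le M C l))"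

definition cor_Lambda :: "('a::semigroup_mult set \<Rightarrow> 'l set) \<Rightarrow> ('a set \<times> 'l) set" where
  "cor_Lambda \<Lambda>D = Sigma Dclasses \<Lambda>D"

definition cor_le :: "('a::semigroup_mult set \<Rightarrow> 'l \<Rightarrow> 'l \<Rightarrow> bool)
    \<Rightarrow> ('a set \<times> 'l) \<Rightarrow> ('a set \<times> 'l) \<Rightarrow> bool" where
  "cor_le leD p q \<longleftrightarrow> Dclass_less (fst p) (fst q) \<or> (fst p = fst q \<and> leD (fst p) (snd p) (snd q))"

definition cor_M :: "('a::semigroup_mult set \<Rightarrow> 'l \<Rightarrow> 'm set) \<Rightarrow> ('a set \<times> 'l) \<Rightarrow> ('a set \<times> 'm) set" where
  "cor_M MD p = Lclasses_in (fst p) \<times> MD (fst p) (snd p)"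

definition cor_C :: "('a::semigroup_mult \<Rightarrow> 'a) \<Rightarrow> ('a set \<Rightarrow> 'a) \<Rightarrow> ('a set \<Rightarrow> 'a)
    \<Rightarrow> ('a set \<Rightarrow> 'l \<Rightarrow> 'm \<Rightarrow> 'm \<Rightarrow> 'a \<Rightarrow> 'r::comm_ring_1)
    \<Rightarrow> ('a set \<times> 'l) \<Rightarrow> ('a set \<times> 'm) \<Rightarrow> ('a set \<times> 'm) \<Rightarrow> 'a \<Rightarrow> 'r" where
  "cor_C st one u CD p Ls Kt =
     (\<lambda>z. \<Sum>g\<in>Hclass (one (fst p)).
        if st (u (fst Ls)) * g * u (fst Kt) = z then CD (fst p) (snd p) (snd Ls) (snd Kt) g else 0)"

end

theory Submission
  imports Defs
begin

text \<open>Every element of a \<open>\<D>\<close>-class \<open>D\<close> factors uniquely as \<open>u\<^sub>L\<^sup>* g u\<^sub>K\<close> with \<open>L, K\<close>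
  \<open>\<L>\<close>-classes of \<open>D\<close> and \<open>g \<in> G\<^sub>D\<close>. So \<open>R\<^sup>\<alpha>[S]\<close> is, as a module, the direct sum over
  \<open>(D, L, K)\<close> of copies of \<open>R[G\<^sub>D]\<close> embedded by \<open>g \<mapsto> u\<^sub>L\<^sup>* g u\<^sub>K\<close>, the cellular bases of the
  \<open>R[G\<^sub>D]\<close> assemble to a basis, and \<open>*\<close> swaps \<open>L\<close> and \<open>K\<close>. For (C3) it suffices to multiply
  by some \<open>x \<in> S\<close>. Either \<open>x u\<^sub>L\<^sup>*\<close> falls below \<open>D\<close> in the \<open>\<J>\<close>-order, and so does the product;
  or, by stability of finite semigroups, \<open>x u\<^sub>L\<^sup>* = u\<^sub>L\<^sub>'\<^sup>* h\<close> with \<open>h \<in> G\<^sub>D\<close>. Since the twisting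
  is constant on \<open>\<R>\<close>-classes in its second argument, the product is then \<open>\<alpha>(x, u\<^sub>L\<^sup>*)\<close> times
  the image of \<open>h C\<^sup>\<lambda>\<^sub>s\<^sub>t\<close>, and (C3) for \<open>R[G\<^sub>D]\<close> applies.\<close>

lemma J_le_refl [simp]: "J_le x x" by (simp add: J_le_def)

lemma R_le_trans: "R_le x y \<Longrightarrow> R_le y z \<Longrightarrow> R_le x z"
  unfolding R_le_def by (metis mult.assoc)
lemma L_le_trans: "L_le x y \<Longrightarrow> L_le y z \<Longrightarrow> L_le x z"
  unfolding L_le_def by (metis mult.assoc)
lemma J_le_trans: "J_le x y \<Longrightarrow> J_le y z \<Longrightarrow> J_le x z"
  unfolding J_le_def by (elim disjE exE) (metis mult.assoc)+

lemma R_le_imp_J_le: "R_le x y \<Longrightarrow> J_le x y" unfolding R_le_def J_le_def by blast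
lemma L_le_imp_J_le: "L_le x y \<Longrightarrow> J_le x y" unfolding L_le_def J_le_def by blast
lemma R_le_mult [simp]: "R_le (x * y) x" unfolding R_le_def by blast
lemma L_le_mult [simp]: "L_le (x * y) y" unfolding L_le_def by blast
lemma J_le_mult_left [simp]: "J_le (x * y) y" unfolding J_le_def by blast
lemma J_le_mult_right [simp]: "J_le (x * y) x" unfolding J_le_def by blast

lemma R_eq_sym: "R_eq x y \<Longrightarrow> R_eq y x" by (simp add: R_eq_def)
lemma R_eq_trans: "R_eq x y \<Longrightarrow> R_eq y z \<Longrightarrow> R_eq x z"
  unfolding R_eq_def using R_le_trans by blast
lemma L_eq_sym: "L_eq x y \<Longrightarrow> L_eq y x" by (simp add: L_eq_def)
lemma L_eq_trans: "L_eq x y \<Longrightarrow> L_eq y z \<Longrightarrow> L_eq x z"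
  unfolding L_eq_def using L_le_trans by blast

lemma D_eq_refl [simp]: "D_eq x x" by (simp add: D_eq_def)
lemma D_eq_trans: "D_eq x y \<Longrightarrow> D_eq y z \<Longrightarrow> D_eq x z"
  unfolding D_eq_def by (rule rtranclp_trans)
lemma R_eq_imp_D_eq: "R_eq x y \<Longrightarrow> D_eq x y" unfolding D_eq_def by auto
lemma L_eq_imp_D_eq: "L_eq x y \<Longrightarrow> D_eq x y" unfolding D_eq_def by auto

lemma D_eq_sym: "D_eq x y \<Longrightarrow> D_eq y x"
  unfolding D_eq_def
proof (induction rule: rtranclp_induct)
  case (step y z)
  then have "(\<lambda>x y. R_eq x y \<or> L_eq x y) z y" using R_eq_sym L_eq_sym by blast
  then show ?case using step(3) by (rule converse_rtranclp_into_rtranclp)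
qed simp

lemma D_eq_imp_J_le: "D_eq x y \<Longrightarrow> J_le x y \<and> J_le y x"
  unfolding D_eq_def
proof (induction rule: rtranclp_induct)
  case (step y z)
  then show ?case unfolding R_eq_def L_eq_def using R_le_imp_J_le L_le_imp_J_le J_le_trans by blast
qed simp

lemma R_le_mult_if_right_unit:
  assumes "R_le e g" "R_le e h" "g * e = g"
  shows "R_le e (g * h)"
proof -
  have "e = g * h \<or> (\<exists>s. e = g * h * s)"
    using assms(1,2) unfolding R_le_def
  proof (elim disjE exE)
    assume "e = g" "e = h"
    then show ?thesis using assms(3) by simp
  next
    fix t assume "e = g" "e = h * t"
    then have "e = g * h * t" using assms(3) by (metis mult.assoc)
    then show ?thesis by blast
  next
    fix t assume "e = g * t" "e = h"
    then have "e = g * h * t" using assms(3) by (metis mult.assoc)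
    then show ?thesis by blast
  next
    fix t1 t2 assume "e = g * t1" "e = h * t2"
    then have "e = g * h * (t2 * t1)" using assms(3) by (metis mult.assoc)
    then show ?thesis by blast
  qed
  then show ?thesis unfolding R_le_def .
qed

section \<open>Stability of finite semigroups\<close>

text \<open>Semigroup powers, shifted by one since there need not be a unit: \<open>spow b n = b\<^sup>n\<^sup>+\<^sup>1\<close>.\<close>
fun spow :: "'a::semigroup_mult \<Rightarrow> nat \<Rightarrow> 'a" where
  "spow b 0 = b"
| "spow b (Suc n) = spow b n * b"

lemma spow_commute: "spow b n * b = b * spow b n"
  by (induction n) (simp_all add: mult.assoc)

lemma spow_add: "spow b m * spow b n = spow b (m + n + 1)"
  by (induction n) (simp_all add: mult.assoc[symmetric])

lemma spow_eq_shift: "spow b i = spow b j \<Longrightarrow> spow b (i + k) = spow b (j + k)"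
  by (induction k) simp_all

lemma spow_periodic:
  assumes "spow b i = spow b (i + p)"
  shows "spow b (i + k) = spow b (i + k + m * p)"
proof (induction m arbitrary: k)
  case (Suc m)
  have "spow b (i + k) = spow b (i + (k + p))"
    using spow_eq_shift[OF assms, of k] by (simp add: algebra_simps)
  also have "\<dots> = spow b (i + (k + p) + m * p)" by (rule Suc)
  finally show ?case by (simp add: algebra_simps)
qed simp

lemma spow_idempotent_exists:
  fixes b :: "'a::{semigroup_mult,finite}"
  obtains n where "spow b n * spow b n = spow b n"
proof -
  have "\<not> inj (spow b)"
    using finite_imageD[of "spow b" UNIV] by auto
  then obtain i j where ij: "spow b i = spow b j" "i < j"
    unfolding inj_def by (metis nat_neq_iff)
  define p where "p = j - i"
  have period: "spow b i = spow b (i + p)" and "p > 0"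
    using ij unfolding p_def by auto
  \<comment> \<open>\<open>N + 1\<close> is a multiple of the period \<open>p\<close> and \<open>N \<ge> i\<close>, so \<open>b\<^sup>2\<^sup>N\<^sup>+\<^sup>2 = b\<^sup>N\<^sup>+\<^sup>1\<close>.\<close>
  define N where "N = p * (i + 1) - 1"
  have "N + 1 = p * (i + 1)" using \<open>p > 0\<close> unfolding N_def by (simp add: Suc_le_eq)
  moreover have "p * (i + 1) \<ge> i + 1" using mult_le_mono1[of 1 p "i + 1"] \<open>p > 0\<close> by simp
  ultimately have "N \<ge> i" "i + (N - i) + (i + 1) * p = N + N + 1"
    by (simp_all add: algebra_simps)
  then have "spow b N * spow b N = spow b (i + (N - i) + (i + 1) * p)"
    using spow_add[of b N N] by simp
  also have "\<dots> = spow b N" using spow_periodic[OF period] \<open>N \<ge> i\<close> by (metis le_add_diff_inverse)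
  finally show ?thesis by (rule that)
qed

text \<open>If \<open>y = a y t\<close> then \<open>y = a\<^sup>n y t\<^sup>n\<close> for all \<open>n\<close>; taking \<open>t\<^sup>n\<close> idempotent gives \<open>y t\<^sup>n = y\<close>,
  hence \<open>y = a\<^sup>n y\<close>.\<close>
lemma sandwich_fixed_imp_left_spow_fixed:
  fixes y :: "'a::{semigroup_mult,finite}"
  assumes "y = a * y * t"
  obtains n where "y = spow a n * y"
proof -
  have iterate: "y = spow a n * y * spow t n" for n
  proof (induction n)
    case (Suc n)
    have "spow a (Suc n) * y * spow t (Suc n) = spow a n * (a * y * t) * spow t n"
      by (simp only: spow.simps spow_commute[of t n] mult.assoc)
    then show ?case using Suc assms by metis
  qed (use assms in simp)
  obtain n where idem: "spow t n * spow t n = spow t n" by (rule spow_idempotent_exists)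
  have "y * spow t n = spow a n * y * (spow t n * spow t n)" by (metis iterate mult.assoc)
  then have "y * spow t n = y" using idem iterate[of n] by metis
  then have "spow a n * y = spow a n * y * spow t n" by (metis mult.assoc)
  then show ?thesis using iterate[of n] that by metis
qed

lemma L_le_spow_mult: "L_le (spow a n * y) (a * y)"
proof (cases n)
  case (Suc m)
  then have "spow a n * y = spow a m * (a * y)" by (simp add: mult.assoc)
  then show ?thesis unfolding L_le_def by blast
qed (simp add: L_le_def)

lemma J_le_left_mult_imp_L_eq:
  fixes x y :: "'a::{semigroup_mult,finite}"
  assumes "J_le y (x * y)"
  shows "L_eq (x * y) y"
proof -
  have fixed_L_le: "L_le y (x * y)" if fixed: "y = a * y * t" and a: "L_le (a * y) (x * y)" for a t
  proof -
    obtain n where "y = spow a n * y" by (rule sandwich_fixed_imp_left_spow_fixed[OF fixed])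
    then show ?thesis using L_le_spow_mult[of a n y] a L_le_trans by metis
  qed
  from assms have "L_le y (x * y)"
    unfolding J_le_def
  proof (elim disjE exE)
    fix t assume "y = x * y * t"
    then show ?thesis using fixed_L_le[of x] by (simp add: L_le_def)
  next
    fix s t assume "y = s * (x * y) * t"
    then show ?thesis using fixed_L_le[of "s * x"] by (metis L_le_mult mult.assoc)
  qed (auto simp: L_le_def)
  then show ?thesis unfolding L_eq_def by simp
qed

locale semigroup_anti_involution =
  fixes st :: "'a::{semigroup_mult,finite} \<Rightarrow> 'a"
  assumes anti_involution: "sg_anti_involution st"
begin

lemma st_st [simp]: "st (st x) = x"
  using anti_involution unfolding sg_anti_involution_def by blast

lemma st_mult [simp]: "st (x * y) = st y * st x"
  using anti_involution unfolding sg_anti_involution_def by blast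

lemma bij_st: "bij st"
  by (metis bij_betw_byWitness st_st subset_UNIV)

lemma R_le_st: "R_le x y \<Longrightarrow> L_le (st x) (st y)"
  unfolding R_le_def L_le_def by auto

lemma L_le_st: "L_le x y \<Longrightarrow> R_le (st x) (st y)"
  unfolding R_le_def L_le_def by auto

lemma J_le_st: "J_le x y \<Longrightarrow> J_le (st x) (st y)"
  unfolding J_le_def by (elim disjE exE) (auto simp: mult.assoc)

lemma R_eq_st: "R_eq x y \<Longrightarrow> L_eq (st x) (st y)"
  unfolding R_eq_def L_eq_def using R_le_st by blast

lemma L_eq_st: "L_eq x y \<Longrightarrow> R_eq (st x) (st y)"
  unfolding R_eq_def L_eq_def using L_le_st by blast

lemma H_eq_st: "H_eq x y \<Longrightarrow> H_eq (st x) (st y)"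
  unfolding H_eq_def using R_eq_st L_eq_st by blast

lemma D_eq_st: "D_eq x y \<Longrightarrow> D_eq (st x) (st y)"
  unfolding D_eq_def
proof (induction rule: rtranclp_induct)
  case (step y z)
  then have "(\<lambda>x y. R_eq x y \<or> L_eq x y) (st y) (st z)" using R_eq_st L_eq_st by blast
  with step(3) show ?case by (rule rtranclp.rtrancl_into_rtrancl)
qed simp

lemma L_le_mult_if_left_unit:
  fixes e g h :: 'a
  assumes "L_le e g" "L_le e h" "e * h = h"
  shows "L_le e (g * h)"
proof -
  have "R_le (st e) (st h * st g)"
    using assms by (intro R_le_mult_if_right_unit) (auto simp: L_le_st simp flip: st_mult)
  then show ?thesis using R_le_st by fastforce
qed

lemma J_le_right_mult_imp_R_eq:
  fixes x y :: 'a
  assumes "J_le x (x * y)"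
  shows "R_eq (x * y) x"
proof -
  have "L_eq (st y * st x) (st x)"
    using J_le_st[OF assms] by (intro J_le_left_mult_imp_L_eq) simp
  then show ?thesis using L_eq_st by fastforce
qed

text \<open>In a finite semigroup \<open>\<J> = \<D>\<close>; only this direction needs stability.\<close>
lemma J_equiv_imp_D_eq:
  fixes x y :: 'a
  assumes "J_le x y" "J_le y x"
  shows "D_eq x y"
  using assms(1) unfolding J_le_def
proof (elim disjE exE)
  fix s assume "x = s * y"
  then show ?thesis using assms(2) J_le_left_mult_imp_L_eq L_eq_imp_D_eq by metis
next
  fix t assume "x = y * t"
  then show ?thesis using assms(2) J_le_right_mult_imp_R_eq R_eq_imp_D_eq by metis
next
  fix s t assume x: "x = s * y * t"
  have "J_le y (y * t)" using assms(2) x J_le_trans[of y x "y * t"] by (simp add: mult.assoc)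
  then have "R_eq (y * t) y" by (rule J_le_right_mult_imp_R_eq)
  moreover have "J_le (y * t) (s * (y * t))"
    using assms(2) x J_le_trans[of "y * t" y "s * (y * t)"] by (simp add: mult.assoc)
  then have "L_eq (s * (y * t)) (y * t)" by (rule J_le_left_mult_imp_L_eq)
  ultimately show ?thesis using x by (metis D_eq_trans L_eq_imp_D_eq R_eq_imp_D_eq mult.assoc)
qed simp

end

section \<open>Twisted semigroup algebras\<close>

lemma mult_if_0: "(k::'r::comm_ring_1) * (if P then x else 0) = (if P then k * x else 0)"
  by simp

lemma if_0_mult: "(if P then x else 0) * (k::'r::comm_ring_1) = (if P then x * k else 0)"
  by simp

lemma if_0_sum: "(if P then sum f A else 0) = (\<Sum>x\<in>A. if P then f x else 0)"
  by simp

lemma sum_delta_conj: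
  "finite A \<Longrightarrow> (\<Sum>x\<in>A. if t = x \<and> P x then f x else 0) = (if t \<in> A \<and> P t then f t else 0)"
  by (simp add: sum.delta flip: if_if_eq_conj cong: if_cong)

lemma tw_mult_assoc:
  fixes \<alpha> :: "'a::{semigroup_mult,finite} \<Rightarrow> 'a \<Rightarrow> 'r::comm_ring_1"
  assumes "twisting \<alpha>"
  shows "tw_mult \<alpha> (tw_mult \<alpha> a b) c = tw_mult \<alpha> a (tw_mult \<alpha> b c)"
proof
  fix z
  have cocycle: "\<alpha> (p * q) y * \<alpha> p q = \<alpha> p (q * y) * \<alpha> q y" for p q y
    using assms unfolding twisting_def by (metis mult.commute)
  note distrib = sum_distrib_left sum_distrib_right if_0_sum mult_if_0 if_0_mult if_if_eq_conj
  have "tw_mult \<alpha> (tw_mult \<alpha> a b) c z =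
      (\<Sum>x\<in>UNIV. \<Sum>y\<in>UNIV. \<Sum>p\<in>UNIV. \<Sum>q\<in>UNIV.
         if p * q = x \<and> x * y = z then \<alpha> x y * \<alpha> p q * a p * b q * c y else 0)"
    unfolding tw_mult_def by (simp add: distrib mult_ac conj_commute cong: if_cong)
  also have "\<dots> = (\<Sum>p\<in>UNIV. \<Sum>q\<in>UNIV. \<Sum>y\<in>UNIV. \<Sum>x\<in>UNIV.
         if p * q = x \<and> x * y = z then \<alpha> x y * \<alpha> p q * a p * b q * c y else 0)"
    by (subst sum.swap, subst (2) sum.swap, subst (3) sum.swap, subst sum.swap, subst (2) sum.swap)
      (rule refl)
  also have "\<dots> = (\<Sum>p\<in>UNIV. \<Sum>q\<in>UNIV. \<Sum>y\<in>UNIV.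
         if p * q * y = z then \<alpha> (p * q) y * \<alpha> p q * a p * b q * c y else 0)"
    by (simp add: sum_delta_conj)
  also have "\<dots> = (\<Sum>p\<in>UNIV. \<Sum>q\<in>UNIV. \<Sum>y\<in>UNIV.
         if p * (q * y) = z then \<alpha> p (q * y) * \<alpha> q y * a p * b q * c y else 0)"
    by (intro sum.cong refl) (simp only: cocycle, simp add: mult.assoc)
  also have "\<dots> = (\<Sum>p\<in>UNIV. \<Sum>q\<in>UNIV. \<Sum>y\<in>UNIV. \<Sum>w\<in>UNIV.
         if q * y = w \<and> p * w = z then \<alpha> p w * \<alpha> q y * a p * b q * c y else 0)"
    by (simp add: sum_delta_conj)
  also have "\<dots> = (\<Sum>p\<in>UNIV. \<Sum>w\<in>UNIV. \<Sum>q\<in>UNIV. \<Sum>y\<in>UNIV.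
         if q * y = w \<and> p * w = z then \<alpha> p w * \<alpha> q y * a p * b q * c y else 0)"
    by (rule sum.cong[OF refl], subst sum.swap, rule sum.cong[OF refl], subst sum.swap, rule refl)
  also have "\<dots> = tw_mult \<alpha> a (tw_mult \<alpha> b c) z"
    unfolding tw_mult_def by (simp add: distrib mult_ac conj_commute cong: if_cong)
  finally show "tw_mult \<alpha> (tw_mult \<alpha> a b) c z = tw_mult \<alpha> a (tw_mult \<alpha> b c) z" .
qed

lemma tw_mult_linear_left:
  "tw_mult \<alpha> (\<lambda>x. k * a x + b x) c = (\<lambda>x. k * tw_mult \<alpha> a c x + tw_mult \<alpha> b c x)"
proof -
  have "(if x * y = z then \<alpha> x y * (k * a x + b x) * c y else 0)
      = k * (if x * y = z then \<alpha> x y * a x * c y else 0) + (if x * y = z then \<alpha> x y * b x * c y else 0)"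
    for x y z by (simp add: algebra_simps)
  then show ?thesis unfolding tw_mult_def by (simp add: sum.distrib sum_distrib_left)
qed

lemma tw_mult_linear_right:
  "tw_mult \<alpha> c (\<lambda>x. k * a x + b x) = (\<lambda>x. k * tw_mult \<alpha> c a x + tw_mult \<alpha> c b x)"
proof -
  have "(if x * y = z then \<alpha> x y * c x * (k * a y + b y) else 0)
      = k * (if x * y = z then \<alpha> x y * c x * a y else 0) + (if x * y = z then \<alpha> x y * c x * b y else 0)"
    for x y z by (simp add: algebra_simps)
  then show ?thesis unfolding tw_mult_def by (simp add: sum.distrib sum_distrib_left)
qed

lemma is_R_algebra_tw_mult: "twisting \<alpha> \<Longrightarrow> is_R_algebra UNIV (tw_mult \<alpha>)"
  unfolding is_R_algebra_def in_alg_def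
  using tw_mult_assoc tw_mult_linear_left tw_mult_linear_right by blast

lemma tw_mult_basis_left:
  "tw_mult \<alpha> (\<lambda>w. if w = x then 1 else 0) f = (\<lambda>z. \<Sum>y\<in>UNIV. if x * y = z then \<alpha> x y * f y else 0)"
proof
  fix z
  have "(if x' * y = z then \<alpha> x' y * (if x' = x then 1 else 0) * f y else 0)
      = (if x' = x then (if x * y = z then \<alpha> x y * f y else 0) else 0)" for x' y
    by auto
  then show "tw_mult \<alpha> (\<lambda>w. if w = x then 1 else 0) f z
      = (\<Sum>y\<in>UNIV. if x * y = z then \<alpha> x y * f y else 0)"
    unfolding tw_mult_def by (simp add: if_0_sum[symmetric])
qed

lemma tw_mult_expand_left:
  "tw_mult \<alpha> a f z = (\<Sum>x\<in>UNIV. a x * tw_mult \<alpha> (\<lambda>w. if w = x then 1 else 0) f z)"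
  unfolding tw_mult_basis_left unfolding tw_mult_def
  by (simp add: sum_distrib_left mult_if_0 mult_ac cong: if_cong)

lemma (in semigroup_anti_involution) alg_anti_involution_lin_star:
  assumes \<alpha>_st: "\<forall>x y. \<alpha> x y = \<alpha> (st y) (st x)"
  shows "alg_anti_involution UNIV (tw_mult \<alpha>) (lin_star st)"
  unfolding alg_anti_involution_def in_alg_def
proof (intro conjI allI impI)
  fix a b :: "'a \<Rightarrow> 'b"
  show "lin_star st (tw_mult \<alpha> a b) = tw_mult \<alpha> (lin_star st b) (lin_star st a)"
  proof
    fix z
    have "lin_star st (tw_mult \<alpha> a b) z
        = (\<Sum>x\<in>UNIV. \<Sum>y\<in>UNIV. if x * y = st z then \<alpha> x y * a x * b y else 0)"
      unfolding lin_star_def tw_mult_def by simp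
    also have "\<dots> = (\<Sum>x\<in>UNIV. \<Sum>y\<in>UNIV.
        if st x * st y = st z then \<alpha> (st x) (st y) * a (st x) * b (st y) else 0)"
      by (subst (1 2) sum.reindex_bij_betw[OF bij_st, symmetric]) (rule refl)
    also have "\<dots> = (\<Sum>x\<in>UNIV. \<Sum>y\<in>UNIV. if y * x = z then \<alpha> y x * b (st y) * a (st x) else 0)"
    proof (intro sum.cong refl)
      fix x y
      have "st x * st y = st z \<longleftrightarrow> y * x = z" by (metis st_mult st_st)
      then show "(if st x * st y = st z then \<alpha> (st x) (st y) * a (st x) * b (st y) else 0)
          = (if y * x = z then \<alpha> y x * b (st y) * a (st x) else 0)"
        using \<alpha>_st by (simp add: mult_ac)
    qed
    also have "\<dots> = tw_mult \<alpha> (lin_star st b) (lin_star st a) z"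
      unfolding lin_star_def tw_mult_def by (subst sum.swap) simp
    finally show "lin_star st (tw_mult \<alpha> a b) z = tw_mult \<alpha> (lin_star st b) (lin_star st a) z" .
  qed
qed (simp_all add: lin_star_def)

lemma lower_span_sum:
  assumes "\<forall>x\<in>A. F x \<in> lower_span \<Lambda> le M C l"
  shows "(\<lambda>z. \<Sum>x\<in>A. a x * F x z) \<in> lower_span \<Lambda> le M C l"
proof -
  let ?S = "{i\<in>cell_index \<Lambda> M. le (fst i) l \<and> fst i \<noteq> l}"
  let ?C = "\<lambda>i. C (fst i) (fst (snd i)) (snd (snd i))"
  obtain c where c: "\<forall>x\<in>A. F x = (\<lambda>z. \<Sum>i\<in>?S. c x i * ?C i z)"
    using assms unfolding lower_span_def by (auto simp: bchoice_iff)
  have "(\<lambda>z. \<Sum>x\<in>A. a x * F x z) = (\<lambda>z. \<Sum>x\<in>A. \<Sum>i\<in>?S. a x * c x i * ?C i z)"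
    using c by (intro ext sum.cong) (auto simp: sum_distrib_left mult.assoc)
  also have "\<dots> = (\<lambda>z. \<Sum>i\<in>?S. (\<Sum>x\<in>A. a x * c x i) * ?C i z)"
    by (subst sum.swap) (simp add: sum_distrib_right)
  finally have eq: "(\<lambda>z. \<Sum>x\<in>A. a x * F x z) = (\<lambda>z. \<Sum>i\<in>?S. (\<Sum>x\<in>A. a x * c x i) * ?C i z)" .
  then show ?thesis
    unfolding lower_span_def by (intro CollectI exI[of _ "\<lambda>i. \<Sum>x\<in>A. a x * c x i"])
qed

lemma lower_span_smult:
  "F \<in> lower_span \<Lambda> le M C l \<Longrightarrow> (\<lambda>z. a * F z) \<in> lower_span \<Lambda> le M C l"
  using lower_span_sum[of "{()}" "\<lambda>_. F" \<Lambda> le M C l "\<lambda>_. a"] by simp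

section \<open>The Rees coordinates of a finite semigroup with anti-involution\<close>

locale Dclass_cell_data = semigroup_anti_involution st
  for st :: "'a::{semigroup_mult,finite} \<Rightarrow> 'a" +
  fixes \<alpha> :: "'a \<Rightarrow> 'a \<Rightarrow> 'r::comm_ring_1"
    and one :: "'a set \<Rightarrow> 'a"
    and u :: "'a set \<Rightarrow> 'a"
    and \<Lambda>D :: "'a set \<Rightarrow> 'l set"
    and leD :: "'a set \<Rightarrow> 'l \<Rightarrow> 'l \<Rightarrow> bool"
    and MD :: "'a set \<Rightarrow> 'l \<Rightarrow> 'm set"
    and CD :: "'a set \<Rightarrow> 'l \<Rightarrow> 'm \<Rightarrow> 'm \<Rightarrow> 'a \<Rightarrow> 'r"
  assumes twisting: "twisting \<alpha>"
    and \<alpha>_st: "\<forall>x y. \<alpha> x y = \<alpha> (st y) (st x)"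
    and one_idempotent: "\<forall>D\<in>Dclasses. one D \<in> D \<and> one D * one D = one D \<and> st (one D) = one D"
    and \<alpha>_R_eq: "\<forall>x y z. R_eq y z \<longrightarrow> \<alpha> x y = \<alpha> x z"
    and cellular_G: "\<forall>D\<in>Dclasses. cellular_algebra (Hclass (one D)) (tw_mult (\<lambda>_ _. 1)) (lin_star st)
                          (\<Lambda>D D) (leD D) (MD D) (CD D)"
    and u_in_Lclass_R_eq_one: "\<forall>D\<in>Dclasses. \<forall>L\<in>Lclasses_in D. u L \<in> L \<and> R_eq (u L) (one D)"
begin

definition G :: "'a set \<Rightarrow> 'a set" where
  "G D = Hclass (one D)"

definition v :: "'a set \<Rightarrow> 'a" where
  "v L = st (u L)"

text \<open>Such a \<open>p\<close> exists since \<open>u\<^sub>K \<R> 1\<^sub>D\<close>. Multiplying by it on the right and by \<open>v_linv D L\<close>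
  on the left recovers \<open>g\<close> from \<open>v\<^sub>L g u\<^sub>K\<close>.\<close>
definition u_rinv :: "'a set \<Rightarrow> 'a set \<Rightarrow> 'a" where
  "u_rinv D K = (SOME p. u K * p = one D \<and> p * one D = p)"

definition v_linv :: "'a set \<Rightarrow> 'a set \<Rightarrow> 'a" where
  "v_linv D L = st (u_rinv D L)"

definition Dclass_of :: "'a \<Rightarrow> 'a set" where
  "Dclass_of z = {y. D_eq z y}"

definition Lclass_of :: "'a \<Rightarrow> 'a set" where
  "Lclass_of z = {y. L_eq z y}"

lemma Dclass_of_in_Dclasses: "Dclass_of z \<in> Dclasses"
  unfolding Dclass_of_def Dclasses_def by blast

lemma mem_Dclass_of: "z \<in> Dclass_of z"
  unfolding Dclass_of_def by simp

lemma Dclass_eq_Dclass_of: "D \<in> Dclasses \<Longrightarrow> z \<in> D \<Longrightarrow> D = Dclass_of z"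
  unfolding Dclasses_def Dclass_of_def using D_eq_sym D_eq_trans by blast

lemma Dclass_of_eq_iff: "Dclass_of x = Dclass_of y \<longleftrightarrow> D_eq x y"
  unfolding Dclass_of_def using D_eq_refl D_eq_sym D_eq_trans by blast

lemma one_in_Dclass: "D \<in> Dclasses \<Longrightarrow> one D \<in> D"
  using one_idempotent by blast

lemma one_idem [simp]: "D \<in> Dclasses \<Longrightarrow> one D * one D = one D"
  using one_idempotent by blast

lemma st_one [simp]: "D \<in> Dclasses \<Longrightarrow> st (one D) = one D"
  using one_idempotent by blast

lemma mem_Dclass_iff: "D \<in> Dclasses \<Longrightarrow> z \<in> D \<longleftrightarrow> D_eq (one D) z"
  using Dclass_eq_Dclass_of[OF _ one_in_Dclass] unfolding Dclass_of_def by blast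

lemma st_mem_Dclass: "D \<in> Dclasses \<Longrightarrow> z \<in> D \<Longrightarrow> st z \<in> D"
  using D_eq_st mem_Dclass_iff by fastforce

lemma Lclass_eq_Lclass_of: "L \<in> Lclasses_in D \<Longrightarrow> y \<in> L \<Longrightarrow> L = Lclass_of y"
  unfolding Lclasses_in_def Lclass_of_def using L_eq_sym L_eq_trans by blast

lemma Lclass_of_in_Lclasses: "D \<in> Dclasses \<Longrightarrow> z \<in> D \<Longrightarrow> Lclass_of z \<in> Lclasses_in D"
  unfolding Lclasses_in_def Lclass_of_def by blast

lemma Lclass_of_cong: "L_eq a b \<Longrightarrow> Lclass_of a = Lclass_of b"
  unfolding Lclass_of_def using L_eq_sym L_eq_trans by blast

lemma finite_Lclasses_in: "finite (Lclasses_in (D :: 'a set))"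
  unfolding Lclasses_in_def by simp

lemma u_in_Lclass: "D \<in> Dclasses \<Longrightarrow> L \<in> Lclasses_in D \<Longrightarrow> u L \<in> L"
  using u_in_Lclass_R_eq_one by blast

lemma u_R_eq_one: "D \<in> Dclasses \<Longrightarrow> L \<in> Lclasses_in D \<Longrightarrow> R_eq (u L) (one D)"
  using u_in_Lclass_R_eq_one by blast

lemma Lclass_of_u: "D \<in> Dclasses \<Longrightarrow> L \<in> Lclasses_in D \<Longrightarrow> Lclass_of (u L) = L"
  using u_in_Lclass Lclass_eq_Lclass_of by metis

lemma v_L_eq_one: "D \<in> Dclasses \<Longrightarrow> L \<in> Lclasses_in D \<Longrightarrow> L_eq (v L) (one D)"
  unfolding v_def using R_eq_st[OF u_R_eq_one] by simp

lemma v_in_Dclass: "D \<in> Dclasses \<Longrightarrow> L \<in> Lclasses_in D \<Longrightarrow> v L \<in> D"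
  using v_L_eq_one L_eq_imp_D_eq D_eq_sym mem_Dclass_iff by blast

lemma one_mult_u: "D \<in> Dclasses \<Longrightarrow> L \<in> Lclasses_in D \<Longrightarrow> one D * u L = u L"
  using u_R_eq_one unfolding R_eq_def R_le_def by (metis mult.assoc one_idem)

lemma u_rinv:
  assumes "D \<in> Dclasses" "K \<in> Lclasses_in D"
  shows "u K * u_rinv D K = one D" "u_rinv D K * one D = u_rinv D K"
proof -
  obtain s where "one D = u K * s"
    using u_R_eq_one[OF assms] assms(1) unfolding R_eq_def R_le_def by (metis one_idem)
  then have "u K * (s * one D) = one D \<and> s * one D * one D = s * one D"
    using one_idem[OF assms(1)] by (metis mult.assoc)
  then have "u K * u_rinv D K = one D \<and> u_rinv D K * one D = u_rinv D K"
    unfolding u_rinv_def by (rule someI)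
  then show "u K * u_rinv D K = one D" "u_rinv D K * one D = u_rinv D K" by auto
qed

lemma v_mult_one: "D \<in> Dclasses \<Longrightarrow> L \<in> Lclasses_in D \<Longrightarrow> v L * one D = v L"
  unfolding v_def by (metis one_mult_u st_mult st_one)

lemma v_linv:
  assumes "D \<in> Dclasses" "L \<in> Lclasses_in D"
  shows "v_linv D L * v L = one D" "one D * v_linv D L = v_linv D L"
  unfolding v_def v_linv_def using u_rinv[OF assms] by (metis st_mult st_one[OF assms(1)])+

lemma G_memD:
  assumes "D \<in> Dclasses" "g \<in> G D"
  shows "one D * g = g" "g * one D = g" "R_le (one D) g" "L_le (one D) g"
proof -
  have "R_le g (one D)" "L_le g (one D)" "R_le (one D) g" "L_le (one D) g"
    using assms(2) unfolding G_def Hclass_def H_eq_def R_eq_def L_eq_def by auto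
  then show "one D * g = g" "g * one D = g" "R_le (one D) g" "L_le (one D) g"
    using one_idem[OF assms(1)] unfolding R_le_def L_le_def by (metis mult.assoc)+
qed

lemma G_memI:
  assumes "D \<in> Dclasses" "one D * g = g" "g * one D = g" "R_le (one D) g" "L_le (one D) g"
  shows "g \<in> G D"
proof -
  have "R_le g (one D)" "L_le g (one D)"
    using assms(2,3) unfolding R_le_def L_le_def by metis+
  then show ?thesis
    using assms(4,5) unfolding G_def Hclass_def H_eq_def R_eq_def L_eq_def by simp
qed

lemma st_in_G: "D \<in> Dclasses \<Longrightarrow> g \<in> G D \<Longrightarrow> st g \<in> G D"
  unfolding G_def Hclass_def using H_eq_st by fastforce

lemma G_mult_closed:
  assumes D: "D \<in> Dclasses" and "g \<in> G D" "h \<in> G D"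
  shows "g * h \<in> G D"
proof (rule G_memI[OF D])
  note g = G_memD[OF D \<open>g \<in> G D\<close>] and h = G_memD[OF D \<open>h \<in> G D\<close>]
  show "one D * (g * h) = g * h" using g by (simp add: mult.assoc[symmetric])
  show "g * h * one D = g * h" using h by (simp add: mult.assoc)
  show "R_le (one D) (g * h)" using g h by (intro R_le_mult_if_right_unit)
  show "L_le (one D) (g * h)" using g h by (intro L_le_mult_if_left_unit)
qed

lemma factor_through_v:
  assumes D: "D \<in> Dclasses" and L: "L \<in> Lclasses_in D"
    and w: "R_eq w (v L)" "L_le (one D) w" "w * one D = w"
  shows "v_linv D L * w \<in> G D" "v L * (v_linv D L * w) = w"
proof -
  note linv = v_linv[OF D L]
  have vw: "v L * (v_linv D L * w) = w"
    using w(1) linv v_mult_one[OF D L] unfolding R_eq_def R_le_def by (metis mult.assoc)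
  then show "v L * (v_linv D L * w) = w" .
  show "v_linv D L * w \<in> G D"
  proof (rule G_memI[OF D])
    show "one D * (v_linv D L * w) = v_linv D L * w" using linv by (simp add: mult.assoc[symmetric])
    show "v_linv D L * w * one D = v_linv D L * w" using w(3) by (simp add: mult.assoc)
    show "R_le (one D) (v_linv D L * w)"
      using w(1) linv unfolding R_eq_def R_le_def by (metis mult.assoc)
    show "L_le (one D) (v_linv D L * w)"
      using w(2) vw unfolding L_le_def by (metis mult.assoc)
  qed
qed

lemma sandwich_props:
  assumes D: "D \<in> Dclasses" and L: "L \<in> Lclasses_in D" and K: "K \<in> Lclasses_in D"
    and g: "g \<in> G D"
  shows "R_eq (v L * g * u K) (v L)" "L_eq (v L * g * u K) (u K)" "v L * g * u K \<in> D"
    "v_linv D L * (v L * g * u K) * u_rinv D K = g"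
proof -
  note gD = G_memD[OF D g] and linv = v_linv[OF D L] and rinv = u_rinv[OF D K]
  show "v_linv D L * (v L * g * u K) * u_rinv D K = g"
    using gD linv rinv by (metis mult.assoc)
  have "v L * g * u K * u_rinv D K = v L * g" using rinv gD by (simp add: mult.assoc)
  moreover have "R_le (v L) (v L * g)"
    using gD(3) v_mult_one[OF D L] unfolding R_le_def by (metis mult.assoc)
  ultimately have "R_le (v L) (v L * g * u K)"
    using R_le_trans R_le_mult by metis
  then show R: "R_eq (v L * g * u K) (v L)"
    unfolding R_eq_def by (metis R_le_mult mult.assoc)
  have "v_linv D L * (v L * g * u K) = g * u K" using linv gD by (metis mult.assoc)
  moreover have "L_le (u K) (g * u K)"
    using gD(4) one_mult_u[OF D K] unfolding L_le_def by (metis mult.assoc)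
  ultimately have "L_le (u K) (v L * g * u K)"
    using L_le_trans L_le_mult by metis
  then show "L_eq (v L * g * u K) (u K)"
    unfolding L_eq_def by simp
  have "D_eq (one D) (v L * g * u K)"
    using R v_L_eq_one[OF D L] R_eq_imp_D_eq L_eq_imp_D_eq D_eq_sym D_eq_trans by metis
  then show "v L * g * u K \<in> D" using mem_Dclass_iff[OF D] by blast
qed

lemma sandwich_unique:
  assumes "D \<in> Dclasses" "L \<in> Lclasses_in D" "K \<in> Lclasses_in D" "g \<in> G D"
    and "D' \<in> Dclasses" "L' \<in> Lclasses_in D'" "K' \<in> Lclasses_in D'" "g' \<in> G D'"
    and eq: "v L * g * u K = v L' * g' * u K'"
  shows "D = D'" "L = L'" "K = K'" "g = g'"
proof -
  note p = sandwich_props[OF assms(1-4)] and p' = sandwich_props[OF assms(5-8)]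
  show DD: "D = D'"
    using Dclass_eq_Dclass_of[OF assms(1) p(3)] Dclass_eq_Dclass_of[OF assms(5) p'(3)] eq by simp
  have "R_eq (v L) (v L')" using p(1) p'(1) eq R_eq_sym R_eq_trans by metis
  then have "L_eq (u L) (u L')" using R_eq_st[of "v L" "v L'"] unfolding v_def by simp
  then show LL: "L = L'" using Lclass_of_cong Lclass_of_u assms by metis
  have "L_eq (u K) (u K')" using p(2) p'(2) eq L_eq_sym L_eq_trans by metis
  then show KK: "K = K'" using Lclass_of_cong Lclass_of_u assms by metis
  show "g = g'" using p(4) p'(4) eq DD LL KK by metis
qed

lemma sandwich_exists:
  obtains D L K g where "D \<in> Dclasses" "L \<in> Lclasses_in D" "K \<in> Lclasses_in D" "g \<in> G D"
    "z = v L * g * u K"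
proof -
  define D where "D = Dclass_of z"
  define K where "K = Lclass_of z"
  define L where "L = Lclass_of (st z)"
  have D: "D \<in> Dclasses" and "z \<in> D" unfolding D_def by (rule Dclass_of_in_Dclasses mem_Dclass_of)+
  have K: "K \<in> Lclasses_in D" and L: "L \<in> Lclasses_in D"
    unfolding K_def L_def using Lclass_of_in_Lclasses st_mem_Dclass D \<open>z \<in> D\<close> by auto
  have z_u: "L_eq z (u K)" using u_in_Lclass[OF D K] unfolding K_def Lclass_of_def by simp
  have "L_eq (st z) (u L)" using u_in_Lclass[OF D L] unfolding L_def Lclass_of_def by simp
  then have z_v: "R_eq z (v L)" unfolding v_def using L_eq_st by fastforce
  note rinv = u_rinv[OF D K]
  have z_rinv_u: "z * u_rinv D K * u K = z"
    using z_u rinv one_mult_u[OF D K] unfolding L_eq_def L_le_def by (metis mult.assoc)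
  define w where "w = z * u_rinv D K"
  have "R_eq w z" using z_rinv_u unfolding w_def R_eq_def R_le_def by metis
  then have "R_eq w (v L)" using z_v R_eq_trans by blast
  moreover have "L_le (one D) w"
    using z_u rinv unfolding w_def L_eq_def L_le_def by (metis mult.assoc)
  moreover have "w * one D = w" unfolding w_def using rinv by (simp add: mult.assoc)
  ultimately have "v_linv D L * w \<in> G D" "v L * (v_linv D L * w) = w"
    using factor_through_v[OF D L] by auto
  moreover have "z = v L * (v_linv D L * w) * u K" using calculation(2) z_rinv_u w_def by simp
  ultimately show ?thesis using that D L K by blast
qed

text \<open>By stability, \<open>x v\<^sub>L \<L> v\<^sub>L\<close>.\<close>
lemma left_mult_v_factor:
  assumes D: "D \<in> Dclasses" and L: "L \<in> Lclasses_in D" and "J_le (v L) (x * v L)"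
  obtains L' h where "L' \<in> Lclasses_in D" "h \<in> G D" "v L' * h = x * v L"
proof -
  define w where "w = x * v L"
  define L' where "L' = Lclass_of (st w)"
  have "L_eq w (v L)" unfolding w_def using assms(3) by (rule J_le_left_mult_imp_L_eq)
  then have w_one: "L_eq w (one D)" using v_L_eq_one[OF D L] L_eq_trans by blast
  then have "w \<in> D" using mem_Dclass_iff[OF D] L_eq_imp_D_eq D_eq_sym by blast
  then have L': "L' \<in> Lclasses_in D" unfolding L'_def by (intro Lclass_of_in_Lclasses st_mem_Dclass D)
  have "L_eq (st w) (u L')" using u_in_Lclass[OF D L'] unfolding L'_def Lclass_of_def by simp
  then have "R_eq w (v L')" unfolding v_def using L_eq_st by fastforce
  moreover have "L_le (one D) w" using w_one unfolding L_eq_def by blast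
  moreover have "w * one D = w" unfolding w_def using v_mult_one[OF D L] by (simp add: mult.assoc)
  ultimately show ?thesis using factor_through_v[OF D L'] that[OF L'] unfolding w_def by metis
qed

lemma Dclass_le_imp_J_le:
  fixes D1 D2 :: "'a set"
  assumes "D1 \<in> Dclasses" "D2 \<in> Dclasses" "Dclass_le D1 D2" "x \<in> D1" "y \<in> D2"
  shows "J_le x y"
proof -
  obtain x' y' where "x' \<in> D1" "y' \<in> D2" "J_le x' y'"
    using assms(3) unfolding Dclass_le_def by blast
  moreover have "D_eq x x'" if "x \<in> D1" "x' \<in> D1" for x x'
    using that assms(1) mem_Dclass_iff D_eq_sym D_eq_trans by meson
  moreover have "D_eq y' y" if "y \<in> D2" "y' \<in> D2" for y y'
    using that assms(2) mem_Dclass_iff D_eq_sym D_eq_trans by meson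
  ultimately show ?thesis using assms(4,5) D_eq_imp_J_le J_le_trans by meson
qed

lemma Dclass_le_antisym:
  fixes D1 D2 :: "'a set"
  assumes "D1 \<in> Dclasses" "D2 \<in> Dclasses" "Dclass_le D1 D2" "Dclass_le D2 D1"
  shows "D1 = D2"
proof -
  have "D_eq (one D1) (one D2)"
    using Dclass_le_imp_J_le assms one_in_Dclass by (blast intro: J_equiv_imp_D_eq)
  then show ?thesis
    by (metis Dclass_eq_Dclass_of Dclass_of_eq_iff assms(1,2) one_in_Dclass)
qed

lemma Dclass_le_trans:
  fixes D1 D2 D3 :: "'a set"
  assumes "D1 \<in> Dclasses" "D2 \<in> Dclasses" "D3 \<in> Dclasses" "Dclass_le D1 D2" "Dclass_le D2 D3"
  shows "Dclass_le D1 D3"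
proof -
  have "J_le (one D1) (one D2)" "J_le (one D2) (one D3)"
    using Dclass_le_imp_J_le assms one_in_Dclass by blast+
  then show ?thesis unfolding Dclass_le_def using J_le_trans one_in_Dclass assms by blast
qed

lemma Dclass_less_trans:
  fixes D1 D2 D3 :: "'a set"
  assumes "D1 \<in> Dclasses" "D2 \<in> Dclasses" "D3 \<in> Dclasses"
    and "Dclass_less D1 D2" "Dclass_less D2 D3"
  shows "Dclass_less D1 D3"
  using assms Dclass_le_trans Dclass_le_antisym unfolding Dclass_less_def by metis

lemma Dclass_less_asym:
  fixes D1 D2 :: "'a set"
  shows "D1 \<in> Dclasses \<Longrightarrow> D2 \<in> Dclasses \<Longrightarrow> Dclass_less D1 D2 \<Longrightarrow> \<not> Dclass_less D2 D1"
  using Dclass_le_antisym unfolding Dclass_less_def by blast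

lemma cellular_algebra_G:
  "D \<in> Dclasses \<Longrightarrow>
    cellular_algebra (G D) (tw_mult (\<lambda>_ _. 1)) (lin_star st) (\<Lambda>D D) (leD D) (MD D) (CD D)"
  using cellular_G unfolding G_def by blast

lemma finite_G: "D \<in> Dclasses \<Longrightarrow> finite (G D)"
  using cellular_algebra_G[of D] unfolding cellular_algebra_def by blast

lemma finite_\<Lambda>D: "D \<in> Dclasses \<Longrightarrow> finite (\<Lambda>D D)"
  using cellular_algebra_G[of D] unfolding cellular_algebra_def by blast

lemma finite_MD: "D \<in> Dclasses \<Longrightarrow> l \<in> \<Lambda>D D \<Longrightarrow> finite (MD D l)"
  using cellular_algebra_G[of D] unfolding cellular_algebra_def by auto

lemma leD_refl: "D \<in> Dclasses \<Longrightarrow> l \<in> \<Lambda>D D \<Longrightarrow> leD D l l"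
  using cellular_algebra_G[of D] unfolding cellular_algebra_def by blast

lemma leD_antisym:
  "D \<in> Dclasses \<Longrightarrow> a \<in> \<Lambda>D D \<Longrightarrow> b \<in> \<Lambda>D D \<Longrightarrow> leD D a b \<Longrightarrow> leD D b a \<Longrightarrow> a = b"
  using cellular_algebra_G[of D] unfolding cellular_algebra_def by blast

lemma leD_trans:
  "D \<in> Dclasses \<Longrightarrow> a \<in> \<Lambda>D D \<Longrightarrow> b \<in> \<Lambda>D D \<Longrightarrow> c \<in> \<Lambda>D D \<Longrightarrow> leD D a b \<Longrightarrow> leD D b c
    \<Longrightarrow> leD D a c"
  using cellular_algebra_G[of D] unfolding cellular_algebra_def by blast

lemma CD_eq_0:
  "D \<in> Dclasses \<Longrightarrow> l \<in> \<Lambda>D D \<Longrightarrow> s \<in> MD D l \<Longrightarrow> t \<in> MD D l \<Longrightarrow> g \<notin> G D \<Longrightarrow> CD D l s t g = 0"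
  using cellular_algebra_G[of D] unfolding cellular_algebra_def in_alg_def by blast

lemma CD_basis:
  "D \<in> Dclasses \<Longrightarrow> in_alg (G D) f \<Longrightarrow>
    \<exists>!r. (\<forall>i. i \<notin> cell_index (\<Lambda>D D) (MD D) \<longrightarrow> r i = 0) \<and>
      f = (\<lambda>x. \<Sum>i\<in>cell_index (\<Lambda>D D) (MD D). r i * CD D (fst i) (fst (snd i)) (snd (snd i)) x)"
  using cellular_algebra_G[of D] unfolding cellular_algebra_def by blast

lemma lin_star_CD:
  "D \<in> Dclasses \<Longrightarrow> l \<in> \<Lambda>D D \<Longrightarrow> s \<in> MD D l \<Longrightarrow> t \<in> MD D l \<Longrightarrow> lin_star st (CD D l s t) = CD D l t s"
  using cellular_algebra_G[of D] unfolding cellular_algebra_def by blast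

lemma CD_C3:
  "D \<in> Dclasses \<Longrightarrow> l \<in> \<Lambda>D D \<Longrightarrow> s \<in> MD D l \<Longrightarrow> in_alg (G D) a \<Longrightarrow>
    \<exists>r. \<forall>t\<in>MD D l. (\<lambda>x. tw_mult (\<lambda>_ _. 1) a (CD D l s t) x - (\<Sum>s'\<in>MD D l. r s' * CD D l s' t x))
                       \<in> lower_span (\<Lambda>D D) (leD D) (MD D) (CD D) l"
  using cellular_algebra_G[of D] unfolding cellular_algebra_def by blast

section \<open>The basis \<open>C\<^sup>(\<^sup>D\<^sup>,\<^sup>\<lambda>\<^sup>)\<^sub>(\<^sub>L\<^sub>,\<^sub>s\<^sub>)\<^sub>(\<^sub>K\<^sub>,\<^sub>t\<^sub>)\<close>\<close>

definition cells :: "(('a set \<times> 'l) \<times> ('a set \<times> 'm) \<times> ('a set \<times> 'm)) set" where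
  "cells = cell_index (cor_Lambda \<Lambda>D) (cor_M MD)"

definition G_cells :: "'a set \<Rightarrow> ('l \<times> 'm \<times> 'm) set" where
  "G_cells D = cell_index (\<Lambda>D D) (MD D)"

definition cell :: "('a set \<times> 'l) \<times> ('a set \<times> 'm) \<times> ('a set \<times> 'm) \<Rightarrow> 'a \<Rightarrow> 'r" where
  "cell i = cor_C st one u CD (fst i) (fst (snd i)) (snd (snd i))"

definition lift_cell :: "'a set \<Rightarrow> 'a set \<Rightarrow> 'a set \<Rightarrow> 'l \<times> 'm \<times> 'm
    \<Rightarrow> ('a set \<times> 'l) \<times> ('a set \<times> 'm) \<times> ('a set \<times> 'm)" where
  "lift_cell D L K j = ((D, fst j), (L, fst (snd j)), (K, snd (snd j)))"

lemma cell_cases: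
  obtains D l L s K t where "i = ((D, l), (L, s), (K, t))"
  by (metis prod.collapse)

lemma mem_cor_Lambda: "(D, l) \<in> cor_Lambda \<Lambda>D \<longleftrightarrow> D \<in> Dclasses \<and> l \<in> \<Lambda>D D"
  unfolding cor_Lambda_def by auto

lemma cor_M_eq: "cor_M MD (D, l) = Lclasses_in D \<times> MD D l"
  unfolding cor_M_def by simp

lemma mem_cells:
  "((D, l), (L, s), (K, t)) \<in> cells \<longleftrightarrow>
     D \<in> Dclasses \<and> l \<in> \<Lambda>D D \<and> L \<in> Lclasses_in D \<and> s \<in> MD D l \<and> K \<in> Lclasses_in D \<and> t \<in> MD D l"
  unfolding cells_def cell_index_def cor_Lambda_def cor_M_def by auto

lemma mem_G_cells: "(l, s, t) \<in> G_cells D \<longleftrightarrow> l \<in> \<Lambda>D D \<and> s \<in> MD D l \<and> t \<in> MD D l"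
  unfolding G_cells_def cell_index_def by auto

lemma finite_cor_Lambda: "finite (cor_Lambda \<Lambda>D)"
  unfolding cor_Lambda_def by (rule finite_SigmaI) (auto intro: finite_\<Lambda>D)

lemma finite_cor_M: "p \<in> cor_Lambda \<Lambda>D \<Longrightarrow> finite (cor_M MD p)"
  unfolding cor_Lambda_def cor_M_def using finite_MD finite_Lclasses_in by auto

lemma finite_cells: "finite cells"
  unfolding cells_def cell_index_def
  using finite_cor_Lambda finite_cor_M by (intro finite_SigmaI) auto

lemma lift_cell_in_cells:
  "D \<in> Dclasses \<Longrightarrow> L \<in> Lclasses_in D \<Longrightarrow> K \<in> Lclasses_in D \<Longrightarrow> j \<in> G_cells D
    \<Longrightarrow> lift_cell D L K j \<in> cells"
  by (cases j) (auto simp: lift_cell_def mem_cells mem_G_cells)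

lemma inj_lift_cell: "inj (lift_cell D L K)"
  unfolding lift_cell_def by (rule injI) (auto simp: prod_eq_iff)

lemma cor_C_sandwich:
  assumes D: "D \<in> Dclasses" and L: "L \<in> Lclasses_in D" and K: "K \<in> Lclasses_in D" and g: "g \<in> G D"
    and i: "((D', l), (L', s), (K', t)) \<in> cells"
  shows "cor_C st one u CD (D', l) (L', s) (K', t) (v L * g * u K)
       = (if D' = D \<and> L' = L \<and> K' = K then CD D l s t g else 0)"
proof -
  have D': "D' \<in> Dclasses" "L' \<in> Lclasses_in D'" "K' \<in> Lclasses_in D'" using i mem_cells by auto
  have "(v L' * g' * u K' = v L * g * u K) \<longleftrightarrow> (g = g' \<and> D' = D \<and> L' = L \<and> K' = K)"
    if "g' \<in> G D'" for g'
    using sandwich_unique[OF D L K g D' that] by metis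
  then have "cor_C st one u CD (D', l) (L', s) (K', t) (v L * g * u K)
      = (\<Sum>g'\<in>G D'. if g = g' \<and> D' = D \<and> L' = L \<and> K' = K then CD D' l s t g' else 0)"
    unfolding cor_C_def G_def[symmetric] v_def[symmetric] fst_conv snd_conv
    by (intro sum.cong) auto
  also have "\<dots> = (if g \<in> G D' \<and> D' = D \<and> L' = L \<and> K' = K then CD D' l s t g else 0)"
    by (rule sum_delta_conj[OF finite_G[OF D'(1)]])
  finally show ?thesis using g by auto
qed

lemma cell_sandwich:
  assumes "D \<in> Dclasses" "L \<in> Lclasses_in D" "K \<in> Lclasses_in D" "g \<in> G D" "i \<in> cells"
  shows "cell i (v L * g * u K) =
    (if fst (fst i) = D \<and> fst (fst (snd i)) = L \<and> fst (snd (snd i)) = K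
     then CD D (snd (fst i)) (snd (fst (snd i))) (snd (snd (snd i))) g else 0)"
  using assms cor_C_sandwich by (cases i rule: cell_cases) (auto simp: cell_def)

lemma sum_cells_sandwich:
  assumes D: "D \<in> Dclasses" and L: "L \<in> Lclasses_in D" and K: "K \<in> Lclasses_in D" and g: "g \<in> G D"
  shows "(\<Sum>i\<in>cells. r i * cell i (v L * g * u K)) =
         (\<Sum>j\<in>G_cells D. r (lift_cell D L K j) * CD D (fst j) (fst (snd j)) (snd (snd j)) g)"
proof -
  let ?z = "v L * g * u K"
  have sub: "lift_cell D L K ` G_cells D \<subseteq> cells" using lift_cell_in_cells[OF D L K] by blast
  have "r i * cell i ?z = 0" if "i \<in> cells - lift_cell D L K ` G_cells D" for i
  proof (cases i rule: cell_cases)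
    case (1 D' l L' s K' t)
    have "\<not> (D' = D \<and> L' = L \<and> K' = K)"
    proof
      assume "D' = D \<and> L' = L \<and> K' = K"
      then have "i = lift_cell D L K (l, s, t)" "(l, s, t) \<in> G_cells D"
        using that 1 by (auto simp: lift_cell_def mem_cells mem_G_cells)
      then show False using that by blast
    qed
    then show ?thesis using cell_sandwich[OF D L K g, of i] that 1 by auto
  qed
  then have "(\<Sum>i\<in>cells. r i * cell i ?z) = (\<Sum>i\<in>lift_cell D L K ` G_cells D. r i * cell i ?z)"
    by (intro sum.mono_neutral_right[OF finite_cells sub]) blast
  also have "\<dots> = (\<Sum>j\<in>G_cells D. r (lift_cell D L K j) * cell (lift_cell D L K j) ?z)"
    by (rule sum.reindex[OF inj_on_subset[OF inj_lift_cell subset_UNIV], unfolded comp_def])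
  also have "\<dots> = (\<Sum>j\<in>G_cells D. r (lift_cell D L K j) * CD D (fst j) (fst (snd j)) (snd (snd j)) g)"
    using cell_sandwich[OF D L K g lift_cell_in_cells[OF D L K]] by (intro sum.cong) (auto simp: lift_cell_def)
  finally show ?thesis .
qed

definition G_coords :: "'a set \<Rightarrow> ('a \<Rightarrow> 'r) \<Rightarrow> 'l \<times> 'm \<times> 'm \<Rightarrow> 'r" where
  "G_coords D \<phi> = (THE r. (\<forall>j. j \<notin> G_cells D \<longrightarrow> r j = 0) \<and>
      \<phi> = (\<lambda>x. \<Sum>j\<in>G_cells D. r j * CD D (fst j) (fst (snd j)) (snd (snd j)) x))"

definition pull :: "'a set \<Rightarrow> 'a set \<Rightarrow> 'a set \<Rightarrow> ('a \<Rightarrow> 'r) \<Rightarrow> 'a \<Rightarrow> 'r" where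
  "pull D L K f = (\<lambda>g. if g \<in> G D then f (v L * g * u K) else 0)"

definition coords :: "('a \<Rightarrow> 'r) \<Rightarrow> ('a set \<times> 'l) \<times> ('a set \<times> 'm) \<times> ('a set \<times> 'm) \<Rightarrow> 'r" where
  "coords f i = (if i \<in> cells
     then G_coords (fst (fst i)) (pull (fst (fst i)) (fst (fst (snd i))) (fst (snd (snd i))) f)
            (snd (fst i), snd (fst (snd i)), snd (snd (snd i)))
     else 0)"

lemma G_coords_unique:
  assumes D: "D \<in> Dclasses" and \<phi>: "in_alg (G D) \<phi>"
  shows "(\<forall>j. j \<notin> G_cells D \<longrightarrow> r j = 0) \<and>
      \<phi> = (\<lambda>x. \<Sum>j\<in>G_cells D. r j * CD D (fst j) (fst (snd j)) (snd (snd j)) x)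
    \<longleftrightarrow> r = G_coords D \<phi>"
    (is "?P r \<longleftrightarrow> _")
proof -
  have ex1: "\<exists>!r. ?P r"
    using CD_basis[OF D \<phi>] unfolding G_cells_def .
  show ?thesis
  proof
    assume "?P r"
    then show "r = G_coords D \<phi>" unfolding G_coords_def by (rule the1_equality[OF ex1, symmetric])
  next
    assume "r = G_coords D \<phi>"
    then show "?P r" unfolding G_coords_def using theI'[OF ex1] by simp
  qed
qed

lemma G_coords_expand:
  assumes "D \<in> Dclasses" "in_alg (G D) \<phi>"
  shows "\<phi> x = (\<Sum>j\<in>G_cells D. G_coords D \<phi> j * CD D (fst j) (fst (snd j)) (snd (snd j)) x)"
proof -
  have "\<phi> = (\<lambda>x. \<Sum>j\<in>G_cells D. G_coords D \<phi> j * CD D (fst j) (fst (snd j)) (snd (snd j)) x)"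
    using G_coords_unique[OF assms, of "G_coords D \<phi>"] by blast
  then show ?thesis by (rule fun_cong)
qed

lemma in_alg_pull: "in_alg (G D) (pull D L K f)"
  unfolding in_alg_def pull_def by simp

lemma coords_lift_cell:
  "D \<in> Dclasses \<Longrightarrow> L \<in> Lclasses_in D \<Longrightarrow> K \<in> Lclasses_in D \<Longrightarrow> j \<in> G_cells D
    \<Longrightarrow> coords f (lift_cell D L K j) = G_coords D (pull D L K f) j"
  using lift_cell_in_cells unfolding coords_def by (simp add: lift_cell_def)

lemma coords_eq_0: "i \<notin> cells \<Longrightarrow> coords f i = 0"
  unfolding coords_def by simp

lemma expand_cells: "f = (\<lambda>z. \<Sum>i\<in>cells. coords f i * cell i z)"
proof
  fix z
  obtain D L K g where dec: "D \<in> Dclasses" "L \<in> Lclasses_in D" "K \<in> Lclasses_in D" "g \<in> G D"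
      and z: "z = v L * g * u K"
    by (rule sandwich_exists)
  have "(\<Sum>i\<in>cells. coords f i * cell i z)
      = (\<Sum>j\<in>G_cells D. coords f (lift_cell D L K j) * CD D (fst j) (fst (snd j)) (snd (snd j)) g)"
    unfolding z by (rule sum_cells_sandwich[OF dec])
  also have "\<dots> = (\<Sum>j\<in>G_cells D. G_coords D (pull D L K f) j * CD D (fst j) (fst (snd j)) (snd (snd j)) g)"
    using coords_lift_cell[OF dec(1-3)] by (intro sum.cong) simp_all
  also have "\<dots> = pull D L K f g"
    by (rule G_coords_expand[OF dec(1) in_alg_pull, symmetric])
  also have "\<dots> = f z" unfolding pull_def z using dec(4) by simp
  finally show "f z = (\<Sum>i\<in>cells. coords f i * cell i z)" by simp
qed

lemma pull_sum_cells:
  assumes D: "D \<in> Dclasses" and L: "L \<in> Lclasses_in D" and K: "K \<in> Lclasses_in D"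
  shows "pull D L K (\<lambda>z. \<Sum>i\<in>cells. r i * cell i z) g
       = (\<Sum>j\<in>G_cells D. r (lift_cell D L K j) * CD D (fst j) (fst (snd j)) (snd (snd j)) g)"
proof (cases "g \<in> G D")
  case True
  then show ?thesis unfolding pull_def using sum_cells_sandwich[OF D L K True] by simp
next
  case False
  have "CD D (fst j) (fst (snd j)) (snd (snd j)) g = 0" if "j \<in> G_cells D" for j
    using that CD_eq_0[OF D _ _ _ False] by (cases j) (auto simp: mem_G_cells)
  then show ?thesis unfolding pull_def using False by simp
qed

lemma coords_unique:
  assumes r: "\<forall>i. i \<notin> cells \<longrightarrow> r i = 0" and f: "f = (\<lambda>z. \<Sum>i\<in>cells. r i * cell i z)"
  shows "r = coords f"
proof
  fix i
  show "r i = coords f i"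
  proof (cases "i \<in> cells")
    case False
    then show ?thesis by (simp add: r[rule_format, OF False] coords_eq_0)
  next
    case True
    obtain D l L s K t where "i = ((D, l), (L, s), (K, t))" by (rule cell_cases)
    then have i: "i = lift_cell D L K (l, s, t)" and
      D: "D \<in> Dclasses" and L: "L \<in> Lclasses_in D" and K: "K \<in> Lclasses_in D"
      and j: "(l, s, t) \<in> G_cells D"
      using True by (simp_all add: lift_cell_def mem_cells mem_G_cells)
    define r' where "r' = (\<lambda>j. if j \<in> G_cells D then r (lift_cell D L K j) else 0)"
    have "pull D L K f = (\<lambda>g. \<Sum>j\<in>G_cells D. r' j * CD D (fst j) (fst (snd j)) (snd (snd j)) g)"
      unfolding f pull_sum_cells[OF D L K] r'_def by (simp cong: sum.cong)
    moreover have "\<forall>j. j \<notin> G_cells D \<longrightarrow> r' j = 0" unfolding r'_def by simp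
    ultimately have "r' = G_coords D (pull D L K f)"
      using G_coords_unique[OF D in_alg_pull] by blast
    then have "r' (l, s, t) = G_coords D (pull D L K f) (l, s, t)" by simp
    then show ?thesis using coords_lift_cell[OF D L K j] j unfolding i r'_def by simp
  qed
qed

lemma cells_basis: "\<exists>!r. (\<forall>i. i \<notin> cells \<longrightarrow> r i = 0) \<and> f = (\<lambda>x. \<Sum>i\<in>cells. r i * cell i x)"
proof (rule ex1I)
  show "(\<forall>i. i \<notin> cells \<longrightarrow> coords f i = 0) \<and> f = (\<lambda>x. \<Sum>i\<in>cells. coords f i * cell i x)"
    using coords_eq_0 expand_cells by blast
qed (use coords_unique in blast)

lemma coords_eq_0_outside:
  assumes i: "i \<in> cells" and f: "\<forall>z\<in>fst (fst i). f z = 0"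
  shows "coords f i = 0"
proof (cases i rule: cell_cases)
  case (1 D l L s K t)
  then have D: "D \<in> Dclasses" and L: "L \<in> Lclasses_in D" and K: "K \<in> Lclasses_in D"
    using i by (auto simp: mem_cells)
  have "pull D L K f = (\<lambda>_. 0)"
    unfolding pull_def using f 1 sandwich_props(3)[OF D L K] by auto
  then have "(\<lambda>_. 0) = G_coords D (pull D L K f)"
    using G_coords_unique[OF D in_alg_pull, of "\<lambda>_. 0" L K f] by simp
  then show ?thesis unfolding coords_def using i 1 by (simp add: fun_eq_iff)
qed

section \<open>The cellular axioms\<close>

abbreviation lower :: "'a set \<times> 'l \<Rightarrow> ('a \<Rightarrow> 'r) set" where
  "lower p \<equiv> lower_span (cor_Lambda \<Lambda>D) (cor_le leD) (cor_M MD) (cor_C st one u CD) p"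

definition lower_cells :: "'a set \<times> 'l \<Rightarrow> (('a set \<times> 'l) \<times> ('a set \<times> 'm) \<times> ('a set \<times> 'm)) set" where
  "lower_cells p = {i\<in>cells. cor_le leD (fst i) p \<and> fst i \<noteq> p}"

lemma in_lowerI:
  assumes T: "T \<subseteq> lower_cells p" and f: "f = (\<lambda>x. \<Sum>i\<in>T. d i * cell i x)"
  shows "f \<in> lower p"
proof -
  have fin: "finite (lower_cells p)" using finite_cells unfolding lower_cells_def by simp
  have "f = (\<lambda>x. \<Sum>i\<in>lower_cells p. (if i \<in> T then d i else 0) * cell i x)"
    unfolding f using T by (intro ext sum.mono_neutral_cong_left[OF fin]) auto
  then show ?thesis
    unfolding lower_span_def lower_cells_def cells_def cell_def
    by (intro CollectI exI[of _ "\<lambda>i. if i \<in> T then d i else 0"])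
qed

lemma supported_below_in_lower:
  assumes D: "D \<in> Dclasses" and f: "\<forall>z. f z \<noteq> 0 \<longrightarrow> Dclass_less (Dclass_of z) D"
  shows "f \<in> lower (D, l)"
proof (rule in_lowerI)
  have "coords f i = 0" if i: "i \<in> cells - lower_cells (D, l)" for i
  proof (cases i rule: cell_cases)
    case (1 D' l' L s K t)
    then have "D' \<in> Dclasses" "\<not> Dclass_less D' D"
      using i unfolding lower_cells_def cor_le_def Dclass_less_def by (auto simp: mem_cells)
    then have "\<forall>z\<in>fst (fst i). f z = 0"
      using f 1 Dclass_eq_Dclass_of by fastforce
    then show ?thesis using i by (intro coords_eq_0_outside) auto
  qed
  then show "f = (\<lambda>x. \<Sum>i\<in>lower_cells (D, l). coords f i * cell i x)"
    by (subst expand_cells, intro ext sum.mono_neutral_right[OF finite_cells])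
      (auto simp: lower_cells_def)
qed (rule order_refl)

lemma lin_star_cor_C:
  assumes D: "D \<in> Dclasses" and l: "l \<in> \<Lambda>D D" and s: "s \<in> MD D l" and t: "t \<in> MD D l"
  shows "lin_star st (cor_C st one u CD (D, l) (L, s) (K, t)) = cor_C st one u CD (D, l) (K, t) (L, s)"
proof
  fix z
  have "v L * g * u K = st z \<longleftrightarrow> v K * st g * u L = z" for g
    unfolding v_def by (metis st_st st_mult mult.assoc)
  then have "lin_star st (cor_C st one u CD (D, l) (L, s) (K, t)) z
      = (\<Sum>g\<in>G D. if v K * st g * u L = z then CD D l s t g else 0)"
    unfolding lin_star_def cor_C_def G_def[symmetric] v_def[symmetric] fst_conv snd_conv by simp
  also have "\<dots> = (\<Sum>h\<in>G D. if v K * h * u L = z then CD D l s t (st h) else 0)"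
    by (rule sum.reindex_bij_witness[of _ st st]) (auto simp: st_in_G[OF D])
  also have "\<dots> = (\<Sum>h\<in>G D. if v K * h * u L = z then CD D l t s h else 0)"
    using lin_star_CD[OF D l s t] unfolding lin_star_def by metis
  also have "\<dots> = cor_C st one u CD (D, l) (K, t) (L, s) z"
    unfolding cor_C_def G_def v_def fst_conv snd_conv ..
  finally show "lin_star st (cor_C st one u CD (D, l) (L, s) (K, t)) z
      = cor_C st one u CD (D, l) (K, t) (L, s) z" .
qed

definition push :: "'a set \<Rightarrow> 'a set \<Rightarrow> 'a set \<Rightarrow> ('a \<Rightarrow> 'r) \<Rightarrow> 'a \<Rightarrow> 'r" where
  "push D L K \<phi> = (\<lambda>z. \<Sum>g\<in>G D. if v L * g * u K = z then \<phi> g else 0)"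

lemma push_CD: "push D L K (CD D l s t) = cor_C st one u CD (D, l) (L, s) (K, t)"
  unfolding push_def cor_C_def G_def v_def fst_conv snd_conv ..

lemma push_sum:
  "push D L K (\<lambda>g. \<Sum>j\<in>J. c j * \<phi> j g) z = (\<Sum>j\<in>J. c j * push D L K (\<phi> j) z)"
proof -
  have "push D L K (\<lambda>g. \<Sum>j\<in>J. c j * \<phi> j g) z
      = (\<Sum>g\<in>G D. \<Sum>j\<in>J. if v L * g * u K = z then c j * \<phi> j g else 0)"
    unfolding push_def by (simp add: if_0_sum)
  also have "\<dots> = (\<Sum>j\<in>J. c j * push D L K (\<phi> j) z)"
    unfolding push_def by (subst sum.swap) (simp add: sum_distrib_left mult_if_0)
  finally show ?thesis .
qed

lemma push_diff: "push D L K (\<lambda>g. \<phi> g - \<psi> g) z = push D L K \<phi> z - push D L K \<psi> z"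
  unfolding push_def by (subst sum_subtractf[symmetric]) (rule sum.cong, auto)

lemma push_smult: "push D L K (\<lambda>g. c * \<phi> g) z = c * push D L K \<phi> z"
  unfolding push_def by (simp add: sum_distrib_left mult_if_0)

lemma push_lower_span:
  assumes D: "D \<in> Dclasses" and L: "L \<in> Lclasses_in D" and K: "K \<in> Lclasses_in D"
    and \<phi>: "\<phi> \<in> lower_span (\<Lambda>D D) (leD D) (MD D) (CD D) l"
  shows "push D L K \<phi> \<in> lower (D, l)"
proof -
  define SG where "SG = {j\<in>G_cells D. leD D (fst j) l \<and> fst j \<noteq> l}"
  define proj where "proj = (\<lambda>i :: ('a set \<times> 'l) \<times> ('a set \<times> 'm) \<times> ('a set \<times> 'm).
    (snd (fst i), snd (fst (snd i)), snd (snd (snd i))))"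
  obtain c where c: "\<phi> = (\<lambda>g. \<Sum>j\<in>SG. c j * CD D (fst j) (fst (snd j)) (snd (snd j)) g)"
    using \<phi> unfolding lower_span_def SG_def G_cells_def by blast
  have "push D L K \<phi> z = (\<Sum>j\<in>SG. c j * cell (lift_cell D L K j) z)" for z
    unfolding c push_sum by (simp add: push_CD cell_def lift_cell_def)
  also have "\<dots> z = (\<Sum>i\<in>lift_cell D L K ` SG. c (proj i) * cell i z)" for z
    by (subst sum.reindex[OF inj_on_subset[OF inj_lift_cell subset_UNIV]])
      (simp add: proj_def lift_cell_def)
  finally have "push D L K \<phi> = (\<lambda>z. \<Sum>i\<in>lift_cell D L K ` SG. c (proj i) * cell i z)" by blast
  moreover have "lift_cell D L K ` SG \<subseteq> lower_cells (D, l)"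
    using lift_cell_in_cells[OF D L K]
    unfolding lower_cells_def SG_def cor_le_def by (auto simp: lift_cell_def)
  ultimately show ?thesis by (intro in_lowerI)
qed

text \<open>The hypothesis on \<open>\<alpha>\<close> makes \<open>\<alpha>(x, v\<^sub>L g u\<^sub>K) = \<alpha>(x, v\<^sub>L)\<close> independent of \<open>g\<close> and \<open>K\<close>.\<close>
lemma basis_mult_cor_C:
  assumes D: "D \<in> Dclasses" and L: "L \<in> Lclasses_in D" and K: "K \<in> Lclasses_in D"
  shows "tw_mult \<alpha> (\<lambda>w. if w = x then 1 else 0) (cor_C st one u CD (D, l) (L, s) (K, t)) z
       = \<alpha> x (v L) * (\<Sum>g\<in>G D. if x * v L * g * u K = z then CD D l s t g else 0)"
proof -
  have "tw_mult \<alpha> (\<lambda>w. if w = x then 1 else 0) (cor_C st one u CD (D, l) (L, s) (K, t)) z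
      = (\<Sum>y\<in>UNIV. \<Sum>g\<in>G D. if v L * g * u K = y \<and> x * y = z then \<alpha> x y * CD D l s t g else 0)"
    unfolding tw_mult_basis_left cor_C_def G_def[symmetric] v_def[symmetric] fst_conv snd_conv
    by (simp add: sum_distrib_left if_0_sum mult_if_0 if_if_eq_conj conj_commute cong: if_cong)
  also have "\<dots> = (\<Sum>g\<in>G D. if x * (v L * g * u K) = z then \<alpha> x (v L * g * u K) * CD D l s t g else 0)"
    by (subst sum.swap) (simp add: sum_delta_conj)
  also have "\<dots> = (\<Sum>g\<in>G D. if x * v L * g * u K = z then \<alpha> x (v L) * CD D l s t g else 0)"
  proof (rule sum.cong[OF refl])
    fix g assume "g \<in> G D"
    then have "\<alpha> x (v L * g * u K) = \<alpha> x (v L)" using \<alpha>_R_eq sandwich_props(1)[OF D L K] by blast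
    then show "(if x * (v L * g * u K) = z then \<alpha> x (v L * g * u K) * CD D l s t g else 0)
        = (if x * v L * g * u K = z then \<alpha> x (v L) * CD D l s t g else 0)"
      by (simp add: mult.assoc)
  qed
  finally show ?thesis by (simp add: sum_distrib_left mult_if_0)
qed

lemma basis_mult_cor_C_below:
  assumes D: "D \<in> Dclasses" and L: "L \<in> Lclasses_in D" and K: "K \<in> Lclasses_in D"
    and not_J: "\<not> J_le (v L) (x * v L)"
  shows "tw_mult \<alpha> (\<lambda>w. if w = x then 1 else 0) (cor_C st one u CD (D, l) (L, s) (K, t)) \<in> lower (D, l)"
proof (rule supported_below_in_lower[OF D], intro allI impI)
  fix z
  assume "tw_mult \<alpha> (\<lambda>w. if w = x then 1 else 0) (cor_C st one u CD (D, l) (L, s) (K, t)) z \<noteq> 0"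
  then have "(\<Sum>g\<in>G D. if x * v L * g * u K = z then CD D l s t g else 0) \<noteq> 0"
    unfolding basis_mult_cor_C[OF D L K] by auto
  then obtain g where "g \<in> G D" "(if x * v L * g * u K = z then CD D l s t g else 0) \<noteq> 0"
    by (rule sum.not_neutral_contains_not_neutral)
  then have z: "z = (x * v L) * (g * u K)" by (auto split: if_splits simp: mult.assoc)
  have "J_le z (v L)" using z J_le_trans J_le_mult_left J_le_mult_right by metis
  then have "Dclass_le (Dclass_of z) D"
    unfolding Dclass_le_def using mem_Dclass_of v_in_Dclass[OF D L] by blast
  moreover have "Dclass_of z \<noteq> D"
  proof
    assume "Dclass_of z = D"
    then have "J_le (v L) z"
      using v_in_Dclass[OF D L] D_eq_imp_J_le unfolding Dclass_of_def by blast
    then show False using not_J z J_le_trans J_le_mult_right by metis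
  qed
  ultimately show "Dclass_less (Dclass_of z) D" unfolding Dclass_less_def by blast
qed

lemma sum_cor_M_single_Lclass:
  fixes c :: "'m \<Rightarrow> 'r" and F :: "'a set \<times> 'm \<Rightarrow> 'r"
  assumes "L' \<in> Lclasses_in D"
  shows "(\<Sum>p\<in>cor_M MD (D, l). (if fst p = L' then c (snd p) else 0) * F p)
       = (\<Sum>s'\<in>MD D l. c s' * F (L', s'))"
proof -
  have "(\<Sum>p\<in>cor_M MD (D, l). (if fst p = L' then c (snd p) else 0) * F p)
      = (\<Sum>L''\<in>Lclasses_in D. \<Sum>s'\<in>MD D l. (if L'' = L' then c s' else 0) * F (L'', s'))"
    unfolding cor_M_eq by (simp add: sum.cartesian_product split_def)
  then show ?thesis
    using assms finite_Lclasses_in by (simp add: if_0_mult sum.delta sum.delta' flip: if_0_sum cong: if_cong)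
qed

lemma push_basis_mult_CD:
  assumes D: "D \<in> Dclasses" and l: "l \<in> \<Lambda>D D" and s: "s \<in> MD D l" and t: "t \<in> MD D l"
    and h: "h \<in> G D"
  shows "push D L K (tw_mult (\<lambda>_ _. 1) (\<lambda>w. if w = h then 1 else 0) (CD D l s t)) z
       = (\<Sum>g\<in>G D. if v L * h * g * u K = z then CD D l s t g else 0)"
proof -
  have "push D L K (tw_mult (\<lambda>_ _. 1) (\<lambda>w. if w = h then 1 else 0) (CD D l s t)) z
      = (\<Sum>y\<in>UNIV. \<Sum>g\<in>G D. if h * y = g \<and> v L * g * u K = z then CD D l s t y else 0)"
    unfolding push_def tw_mult_basis_left
    by (subst sum.swap) (simp add: if_0_sum if_if_eq_conj conj_commute cong: if_cong)
  also have "\<dots> = (\<Sum>y\<in>UNIV. if h * y \<in> G D \<and> v L * (h * y) * u K = z then CD D l s t y else 0)"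
    by (simp add: sum_delta_conj[OF finite_G[OF D]])
  also have "\<dots> = (\<Sum>y\<in>UNIV. if y \<in> G D then (if v L * h * y * u K = z then CD D l s t y else 0) else 0)"
    using G_mult_closed[OF D h] CD_eq_0[OF D l s t] by (intro sum.cong) (auto simp: mult.assoc)
  finally show ?thesis by (simp add: sum.If_cases)
qed

text \<open>If \<open>x v\<^sub>L = v\<^sub>L\<^sub>' h\<close> with \<open>h \<in> G\<^sub>D\<close>, left multiplication by \<open>x\<close> on the cells over \<open>L\<close> is
  left multiplication by \<open>h\<close> in \<open>R[G\<^sub>D]\<close>, pushed to the cells over \<open>L'\<close>; (C3) for \<open>R[G\<^sub>D]\<close> applies.\<close>
lemma basis_mult_cor_C_same:
  assumes D: "D \<in> Dclasses" and l: "l \<in> \<Lambda>D D" and s: "s \<in> MD D l" and L: "L \<in> Lclasses_in D"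
    and L': "L' \<in> Lclasses_in D" and h: "h \<in> G D" and vh: "v L' * h = x * v L"
  obtains r where "\<forall>Kt\<in>cor_M MD (D, l).
    (\<lambda>z. tw_mult \<alpha> (\<lambda>w. if w = x then 1 else 0) (cor_C st one u CD (D, l) (L, s) Kt) z
       - (\<Sum>p\<in>cor_M MD (D, l). r p * cor_C st one u CD (D, l) p Kt z)) \<in> lower (D, l)"
proof -
  have "in_alg (G D) (\<lambda>w. if w = h then 1 else 0)" unfolding in_alg_def using h by auto
  then obtain rh where rh: "\<forall>t\<in>MD D l.
      (\<lambda>g. tw_mult (\<lambda>_ _. 1) (\<lambda>w. if w = h then 1 else 0) (CD D l s t) g
         - (\<Sum>s'\<in>MD D l. rh s' * CD D l s' t g)) \<in> lower_span (\<Lambda>D D) (leD D) (MD D) (CD D) l"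
    using CD_C3[OF D l s] by blast
  define A where "A = \<alpha> x (v L)"
  define r where "r = (\<lambda>p. if fst p = L' then A * rh (snd p) else 0)"
  have "(\<lambda>z. tw_mult \<alpha> (\<lambda>w. if w = x then 1 else 0) (cor_C st one u CD (D, l) (L, s) (K, t)) z
       - (\<Sum>p\<in>cor_M MD (D, l). r p * cor_C st one u CD (D, l) p (K, t) z)) \<in> lower (D, l)"
    if K: "K \<in> Lclasses_in D" and t: "t \<in> MD D l" for K t
  proof -
    have "tw_mult \<alpha> (\<lambda>w. if w = x then 1 else 0) (cor_C st one u CD (D, l) (L, s) (K, t)) z
       - (\<Sum>p\<in>cor_M MD (D, l). r p * cor_C st one u CD (D, l) p (K, t) z)
       = push D L' K (\<lambda>g. A * (tw_mult (\<lambda>_ _. 1) (\<lambda>w. if w = h then 1 else 0) (CD D l s t) g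
           - (\<Sum>s'\<in>MD D l. rh s' * CD D l s' t g))) z" for z
      unfolding basis_mult_cor_C[OF D L K] push_smult push_diff push_sum
        push_basis_mult_CD[OF D l s t h] vh A_def[symmetric] r_def sum_cor_M_single_Lclass[OF L', where c = "\<lambda>s'. A * rh s'"]
      by (simp add: push_CD sum_distrib_left mult.assoc right_diff_distrib)
    then show ?thesis
      using rh t by (simp only:) (intro push_lower_span[OF D L' K] lower_span_smult, blast)
  qed
  then show ?thesis using that unfolding cor_M_eq by blast
qed

lemma basis_mult_cor_C_left_mult:
  assumes D: "D \<in> Dclasses" and l: "l \<in> \<Lambda>D D" and L: "L \<in> Lclasses_in D" and s: "s \<in> MD D l"
  obtains r where "\<forall>Kt\<in>cor_M MD (D, l).
    (\<lambda>z. tw_mult \<alpha> (\<lambda>w. if w = x then 1 else 0) (cor_C st one u CD (D, l) (L, s) Kt) z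
       - (\<Sum>p\<in>cor_M MD (D, l). r p * cor_C st one u CD (D, l) p Kt z)) \<in> lower (D, l)"
proof (cases "J_le (v L) (x * v L)")
  case True
  then obtain L' h where "L' \<in> Lclasses_in D" "h \<in> G D" "v L' * h = x * v L"
    by (rule left_mult_v_factor[OF D L])
  then show ?thesis using basis_mult_cor_C_same[OF D l s L] that by blast
next
  case False
  then show ?thesis
    using that[of "\<lambda>_. 0"] basis_mult_cor_C_below[OF D L _ False] unfolding cor_M_eq by auto
qed

lemma cor_C_left_mult:
  assumes D: "D \<in> Dclasses" and l: "l \<in> \<Lambda>D D" and L: "L \<in> Lclasses_in D" and s: "s \<in> MD D l"
  shows "\<exists>r. \<forall>Kt\<in>cor_M MD (D, l).
    (\<lambda>z. tw_mult \<alpha> a (cor_C st one u CD (D, l) (L, s) Kt) z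
       - (\<Sum>p\<in>cor_M MD (D, l). r p * cor_C st one u CD (D, l) p Kt z)) \<in> lower (D, l)"
proof -
  let ?C = "\<lambda>p Kt. cor_C st one u CD (D, l) p Kt"
  let ?X = "\<lambda>x Kt z. tw_mult \<alpha> (\<lambda>w. if w = x then 1 else 0) (?C (L, s) Kt) z"
  let ?M = "cor_M MD (D, l)"
  have "\<forall>x. \<exists>r. \<forall>Kt\<in>?M. (\<lambda>z. ?X x Kt z - (\<Sum>p\<in>?M. r p * ?C p Kt z)) \<in> lower (D, l)"
    using basis_mult_cor_C_left_mult[OF D l L s] by blast
  then obtain R where R: "\<forall>x. \<forall>Kt\<in>?M. (\<lambda>z. ?X x Kt z - (\<Sum>p\<in>?M. R x p * ?C p Kt z)) \<in> lower (D, l)"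
    by (auto dest: choice)
  have eq: "(\<lambda>z. tw_mult \<alpha> a (?C (L, s) Kt) z - (\<Sum>p\<in>?M. (\<Sum>x\<in>UNIV. a x * R x p) * ?C p Kt z))
      = (\<lambda>z. \<Sum>x\<in>UNIV. a x * (?X x Kt z - (\<Sum>p\<in>?M. R x p * ?C p Kt z)))" for Kt
  proof
    fix z
    have "(\<Sum>p\<in>?M. (\<Sum>x\<in>UNIV. a x * R x p) * ?C p Kt z)
        = (\<Sum>p\<in>?M. \<Sum>x\<in>UNIV. a x * (R x p * ?C p Kt z))"
      by (simp add: sum_distrib_right mult.assoc)
    also have "\<dots> = (\<Sum>x\<in>UNIV. a x * (\<Sum>p\<in>?M. R x p * ?C p Kt z))"
      by (subst sum.swap) (simp add: sum_distrib_left)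
    finally have "(\<Sum>p\<in>?M. (\<Sum>x\<in>UNIV. a x * R x p) * ?C p Kt z)
        = (\<Sum>x\<in>UNIV. a x * (\<Sum>p\<in>?M. R x p * ?C p Kt z))" .
    then show "tw_mult \<alpha> a (?C (L, s) Kt) z - (\<Sum>p\<in>?M. (\<Sum>x\<in>UNIV. a x * R x p) * ?C p Kt z)
        = (\<Sum>x\<in>UNIV. a x * (?X x Kt z - (\<Sum>p\<in>?M. R x p * ?C p Kt z)))"
      by (subst tw_mult_expand_left) (simp add: right_diff_distrib sum_subtractf)
  qed
  show ?thesis
  proof (intro exI[of _ "\<lambda>p. \<Sum>x\<in>UNIV. a x * R x p"] ballI)
    fix Kt assume "Kt \<in> ?M"
    then have "(\<lambda>z. \<Sum>x\<in>UNIV. a x * (\<lambda>z. ?X x Kt z - (\<Sum>p\<in>?M. R x p * ?C p Kt z)) z) \<in> lower (D, l)"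
      using R by (intro lower_span_sum) blast
    then show "(\<lambda>z. tw_mult \<alpha> a (?C (L, s) Kt) z - (\<Sum>p\<in>?M. (\<Sum>x\<in>UNIV. a x * R x p) * ?C p Kt z))
        \<in> lower (D, l)"
      by (simp only: eq)
  qed
qed

lemma cor_le_refl: "\<forall>p\<in>cor_Lambda \<Lambda>D. cor_le leD p p"
  unfolding cor_Lambda_def cor_le_def using leD_refl by auto

lemma cor_le_antisym:
  "\<forall>p\<in>cor_Lambda \<Lambda>D. \<forall>q\<in>cor_Lambda \<Lambda>D. cor_le leD p q \<and> cor_le leD q p \<longrightarrow> p = q"
proof (intro ballI impI)
  fix p q
  assume "p \<in> cor_Lambda \<Lambda>D" "q \<in> cor_Lambda \<Lambda>D" and le: "cor_le leD p q \<and> cor_le leD q p"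
  moreover obtain D1 l1 D2 l2 where pq: "p = (D1, l1)" "q = (D2, l2)" by fastforce
  ultimately have D: "D1 \<in> Dclasses" "l1 \<in> \<Lambda>D D1" "D2 \<in> Dclasses" "l2 \<in> \<Lambda>D D2"
    by (simp_all add: mem_cor_Lambda)
  have "D1 = D2"
    using le Dclass_less_asym[OF D(1,3)] unfolding pq cor_le_def by auto
  moreover from this have "leD D1 l1 l2" "leD D1 l2 l1"
    using le unfolding pq cor_le_def Dclass_less_def by auto
  ultimately show "p = q"
    using leD_antisym[OF D(1,2)] D(4) pq by simp
qed

lemma cor_le_trans:
  "\<forall>p\<in>cor_Lambda \<Lambda>D. \<forall>q\<in>cor_Lambda \<Lambda>D. \<forall>q'\<in>cor_Lambda \<Lambda>D.
     cor_le leD p q \<and> cor_le leD q q' \<longrightarrow> cor_le leD p q'"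
proof (intro ballI impI)
  fix p q q'
  assume "p \<in> cor_Lambda \<Lambda>D" "q \<in> cor_Lambda \<Lambda>D" "q' \<in> cor_Lambda \<Lambda>D"
    and le: "cor_le leD p q \<and> cor_le leD q q'"
  moreover obtain D1 l1 D2 l2 D3 l3 where pq: "p = (D1, l1)" "q = (D2, l2)" "q' = (D3, l3)"
    by fastforce
  ultimately have D: "D1 \<in> Dclasses" "l1 \<in> \<Lambda>D D1" "D2 \<in> Dclasses" "l2 \<in> \<Lambda>D D2"
      "D3 \<in> Dclasses" "l3 \<in> \<Lambda>D D3"
    by (simp_all add: mem_cor_Lambda)
  from le consider "Dclass_less D1 D2" "Dclass_less D2 D3" | "Dclass_less D1 D2" "D2 = D3"
    | "D1 = D2" "Dclass_less D2 D3" | "D1 = D2" "D2 = D3" "leD D1 l1 l2" "leD D1 l2 l3"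
    unfolding pq cor_le_def by auto
  then have "Dclass_less D1 D3 \<or> (D1 = D3 \<and> leD D1 l1 l3)"
  proof cases
    case 1
    then show ?thesis using Dclass_less_trans[OF D(1,3,5)] by blast
  next
    case 4
    then show ?thesis using leD_trans D by metis
  qed simp_all
  then show "cor_le leD p q'" unfolding pq cor_le_def by simp
qed

lemma cor_C_basis:
  "\<forall>f. in_alg UNIV f \<longrightarrow>
     (\<exists>!r. (\<forall>i. i \<notin> cell_index (cor_Lambda \<Lambda>D) (cor_M MD) \<longrightarrow> r i = 0) \<and>
        f = (\<lambda>x. \<Sum>i\<in>cell_index (cor_Lambda \<Lambda>D) (cor_M MD).
                  r i * cor_C st one u CD (fst i) (fst (snd i)) (snd (snd i)) x))"
  using cells_basis unfolding cells_def cell_def by blast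

lemma cor_C_star:
  "\<forall>p\<in>cor_Lambda \<Lambda>D. \<forall>Ls\<in>cor_M MD p. \<forall>Kt\<in>cor_M MD p.
     lin_star st (cor_C st one u CD p Ls Kt) = cor_C st one u CD p Kt Ls"
  by (auto simp: cor_Lambda_def cor_M_def intro!: lin_star_cor_C)

lemma cor_C_cell_C3:
  "\<forall>p\<in>cor_Lambda \<Lambda>D. \<forall>Ls\<in>cor_M MD p. \<forall>a. in_alg UNIV a \<longrightarrow>
     (\<exists>r. \<forall>Kt\<in>cor_M MD p. (\<lambda>x. tw_mult \<alpha> a (cor_C st one u CD p Ls Kt) x
        - (\<Sum>s'\<in>cor_M MD p. r s' * cor_C st one u CD p s' Kt x)) \<in> lower p)"
proof (intro ballI allI impI)
  fix p Ls and a :: "'a \<Rightarrow> 'r"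
  assume "p \<in> cor_Lambda \<Lambda>D" "Ls \<in> cor_M MD p"
  moreover obtain D l L s where "p = (D, l)" "Ls = (L, s)" by fastforce
  ultimately show "\<exists>r. \<forall>Kt\<in>cor_M MD p. (\<lambda>x. tw_mult \<alpha> a (cor_C st one u CD p Ls Kt) x
        - (\<Sum>s'\<in>cor_M MD p. r s' * cor_C st one u CD p s' Kt x)) \<in> lower p"
    using cor_C_left_mult by (auto simp: mem_cor_Lambda cor_M_eq)
qed

end

theorem corollary7:
  fixes st :: "'a::{semigroup_mult,finite} \<Rightarrow> 'a"
    and \<alpha> :: "'a \<Rightarrow> 'a \<Rightarrow> 'r::comm_ring_1"
    and one :: "'a set \<Rightarrow> 'a"
    and u :: "'a set \<Rightarrow> 'a"
    and \<Lambda>D :: "'a set \<Rightarrow> 'l set"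
    and leD :: "'a set \<Rightarrow> 'l \<Rightarrow> 'l \<Rightarrow> bool"
    and MD :: "'a set \<Rightarrow> 'l \<Rightarrow> 'm set"
    and CD :: "'a set \<Rightarrow> 'l \<Rightarrow> 'm \<Rightarrow> 'm \<Rightarrow> 'a \<Rightarrow> 'r"
  assumes "sg_anti_involution st"
    and "twisting \<alpha>"
    and "\<forall>x y. \<alpha> x y = \<alpha> (st y) (st x)"
    and "\<forall>D\<in>Dclasses. one D \<in> D \<and> one D * one D = one D \<and> st (one D) = one D"
    and "\<forall>x y z. R_eq y z \<longrightarrow> \<alpha> x y = \<alpha> x z"
    and "\<forall>D\<in>Dclasses. cellular_algebra (Hclass (one D)) (tw_mult (\<lambda>_ _. 1)) (lin_star st)
                          (\<Lambda>D D) (leD D) (MD D) (CD D)"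
    and "\<forall>D\<in>Dclasses. \<forall>L\<in>Lclasses_in D. u L \<in> L \<and> R_eq (u L) (one D)"
  shows "cellular_algebra UNIV (tw_mult \<alpha>) (lin_star st)
           (cor_Lambda \<Lambda>D) (cor_le leD) (cor_M MD) (cor_C st one u CD)"
proof -
  interpret Dclass_cell_data st \<alpha> one u \<Lambda>D leD MD CD
    by (intro Dclass_cell_data.intro semigroup_anti_involution.intro Dclass_cell_data_axioms.intro;
        rule assms)
  show ?thesis
    unfolding cellular_algebra_def
    by (intro conjI is_R_algebra_tw_mult[OF twisting] finite_cor_Lambda ballI finite_cor_M
        cor_le_refl cor_le_antisym cor_le_trans cor_C_basis
        alg_anti_involution_lin_star[OF \<alpha>_st] cor_C_star cor_C_cell_C3)
      (simp_all add: in_alg_def)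
qed

end
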